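(* Let $p\in[2,\infty)$. There exists a constant $C=C(a,b,d,K,L,\varrho,p)>0$ such that for every $n\ge\lfloor b-a\rfloor+1$ satisfying $Lh<1$ (with $h=(b-a)/n$) and every $(\eta,f)\in F^\varrho(a,b,d,K,L)$, $$\Bigl(\mathbb{E}\Bigl[\max_{0\le j\le n}\bigl\|z(t_j)-V^j_{S2}\bigr\|^p\Bigr]\Bigr)^{1/p}\le C h^{\varrho+\frac12},$$ where $z$ is the solution of $z'(t)=f(t,z(t))$, $t\in[a,b]$, $z(a)=\eta$, and $V^j_{S2}$ are the values produced by the implicit randomized RK2 scheme (S2).
   Context: Let $-\infty<a<b<\infty$, $d\in\mathbb{Z}_+$, $\varrho\in(0,1]$, $K,L\in(0,\infty)$. The class $F^\varrho=F^\varrho(a,b,d,K,L)$ consists of pairs $(\eta,f)$ with $\eta\in\mathbb{R}^d$, $f\colon[a,b]\times\mathbb{R}^d\to\mathbb{R}^d$ such that: $\|\eta\|\le K$; $f$ is continuous; $\|f(t,x)\|\le K(1+\|x\|)$ for all $(t,x)$; $\|f(t,x)-f(s,x)\|\le L|t-s|^\varrho$ for all $t,s\in[a,b]$, $x\in\mathbb{R}^d$; $\|f(t,x)-f(t,y)\|\le L\|x-y\|$ for all $t\in[a,b]$, $x,y\in\mathbb{R}^d$. For $n\in\mathbb{Z}_+$ put $h=(b-a)/n$, $t_j=a+jh$. Let $\tau_1,\tau_2,\ldots$ be independent random variables uniformly distributed on $[0,1]$ on a complete probability space; $\theta_j=t_{j-1}+h\tau_j$. The implicit randomized RK2 scheme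 (S2) is: $V^0=\eta$, and for $j=1,\ldots,n$: $V^j=V^{j-1}+hf(\theta_j,(1-\tau_j)V^{j-1}+\tau_jV^j)$ (the almost surely unique solution of this implicit equation, which exists when $Lh<1$). *)

theory Defs
  imports "HOL-Probability.Probability"
begin

text \<open>The class F^rho(a,b,d,K,L); the dimension d is the dimension of the
  Euclidean space 'a.\<close>
definition F_class ::
  "real \<Rightarrow> real \<Rightarrow> real \<Rightarrow> real \<Rightarrow> real \<Rightarrow> 'a::euclidean_space \<Rightarrow> (real \<Rightarrow> 'a \<Rightarrow> 'a) \<Rightarrow> bool"
  where "F_class a b rho K L eta f \<longleftrightarrow>
     norm eta \<le> K \<and>
     continuous_on ({a..b} \<times> UNIV) (\<lambda>(t, x). f t x) \<and>
     (\<forall>t\<in>{a..b}. \<forall>x. norm (f t x) \<le> K * (1 + norm x)) \<and>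
     (\<forall>t\<in>{a..b}. \<forall>s\<in>{a..b}. \<forall>x. norm (f t x - f s x) \<le> L * \<bar>t - s\<bar> powr rho) \<and>
     (\<forall>t\<in>{a..b}. \<forall>x y. norm (f t x - f t y) \<le> L * norm (x - y))"

text \<open>The implicit randomized RK2 scheme (S2), for given realizations tau j of
  the random variables (tau 0 is unused; step j uses tau j).\<close>
fun rk2_implicit ::
  "real \<Rightarrow> real \<Rightarrow> (nat \<Rightarrow> real) \<Rightarrow> 'a::euclidean_space \<Rightarrow> (real \<Rightarrow> 'a \<Rightarrow> 'a) \<Rightarrow> nat \<Rightarrow> 'a"
  where
    "rk2_implicit a h tau eta f 0 = eta"
  | "rk2_implicit a h tau eta f (Suc j) =
       (let v = rk2_implicit a h tau eta f j;
            s = tau (Suc j);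
            theta = a + real j * h + h * s
        in THE w. w = v + h *\<^sub>R f theta ((1 - s) *\<^sub>R v + s *\<^sub>R w))"

end

theory Submission
  imports Defs
begin

text \<open>Write \<open>e_j = z(t_j) - V^j\<close>. Subtracting the scheme from the exact increments gives
  \<open>e_j = \<Sum>_(k\<le>j) D_k + h \<Sum>_(k\<le>j) S_k\<close>, where the local defects
  \<open>D_k = z(t_k) - z(t_(k-1)) - h f(\<theta>_k, z(\<theta>_k))\<close> are independent, of size \<open>O(h^(\<rho>+1))\<close> by the
  Hoelder continuity of \<open>t \<mapsto> f(t, z(t))\<close>, and centred because \<open>\<theta>_k\<close> is uniform on
  \<open>[t_(k-1), t_k]\<close>; the stage errors \<open>S_k\<close> are bounded by \<open>L (|e_(k-1)| + |e_k|)\<close> plus an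
  interpolation error of the same order \<open>h^(\<rho>+1)\<close>. Since \<open>L h\<close> stays uniformly below 1, a discrete
  Gronwall argument bounds \<open>max_j |e_j|\<close> pathwise by the maximal partial sum of the \<open>D_k\<close> plus
  \<open>O(h^(\<rho>+1))\<close>. Coordinatewise, Hoeffding's lemma and a dyadic chaining argument give
  \<open>E max_i |\<Sum>_(k\<le>i) D_k|^p \<le> C (n h^(2\<rho>+2))^(p/2) = C' h^(p(\<rho>+1/2))\<close>.\<close>

section \<open>Maximal moments of sums of bounded independent centred variables\<close>

lemma (in finite_measure) integrable_bounded:
  fixes f :: "'a \<Rightarrow> real"
  assumes "f \<in> borel_measurable M" and "\<And>x. x \<in> space M \<Longrightarrow> \<bar>f x\<bar> \<le> B"
  shows "integrable M f"
  by (rule integrable_const_bound[where B=B]) (use assms in \<open>auto intro: AE_I2\<close>)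

lemma (in prob_space) expectation_exp_sum_le:
  fixes \<xi> :: "nat \<Rightarrow> 'a \<Rightarrow> real"
  assumes indep: "indep_vars (\<lambda>_. borel) \<xi> UNIV"
    and bnd: "\<And>k x. x \<in> space M \<Longrightarrow> \<bar>\<xi> k x\<bar> \<le> \<beta>"
    and E0: "\<And>k. expectation (\<xi> k) = 0"
    and I: "finite I" and l: "l > 0"
  shows "expectation (\<lambda>x. exp (l * (\<Sum>k\<in>I. \<xi> k x))) \<le> exp (l\<^sup>2 * real (card I) * \<beta>\<^sup>2 / 2)"
proof -
  have rv: "\<And>k. random_variable borel (\<xi> k)" using indep unfolding indep_vars_def by blast
  have indI: "indep_vars (\<lambda>_. borel) (\<lambda>k x. exp (l * \<xi> k x)) I"
    by (rule indep_vars_compose2[OF indep_vars_subset[OF indep]]) auto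
  have int: "integrable M (\<lambda>x. exp (l * \<xi> k x))" for k
  proof (rule integrable_bounded[where B="exp (l * \<beta>)"])
    fix x assume x: "x \<in> space M"
    have "l * \<xi> k x \<le> l * \<beta>" using bnd[OF x, of k] l by (intro mult_left_mono) auto
    then show "\<bar>exp (l * \<xi> k x)\<bar> \<le> exp (l * \<beta>)" by simp
  qed (use rv in simp)
  have single: "expectation (\<lambda>x. exp (l * \<xi> k x)) \<le> exp (l\<^sup>2 * \<beta>\<^sup>2 / 2)" for k
  proof -
    interpret interval_bounded_random_variable M "\<xi> k" "-\<beta>" "\<beta>"
    proof
      show "random_variable borel (\<xi> k)" by (rule rv)
      show "AE x in M. \<xi> k x \<in> {- \<beta>..\<beta>}"
      proof (rule AE_I2)
        fix x assume "x \<in> space M"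
        then show "\<xi> k x \<in> {- \<beta>..\<beta>}" using bnd[of x k] by (simp add: abs_le_iff)
      qed
    qed
    have "nn_integral M (\<lambda>x. exp (l * \<xi> k x)) \<le> ennreal (exp (l\<^sup>2 * (\<beta> - - \<beta>)\<^sup>2 / 8))"
      using Hoeffdings_lemma_nn_integral_0[OF l E0] by simp
    also have "l\<^sup>2 * (\<beta> - - \<beta>)\<^sup>2 / 8 = l\<^sup>2 * \<beta>\<^sup>2 / 2" by (simp add: power2_eq_square)
    finally show ?thesis
      by (simp add: nn_integral_eq_integral[OF int])
  qed
  have "expectation (\<lambda>x. exp (l * (\<Sum>k\<in>I. \<xi> k x))) = expectation (\<lambda>x. \<Prod>k\<in>I. exp (l * \<xi> k x))"
    by (simp add: sum_distrib_left exp_sum I)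
  also have "\<dots> = (\<Prod>k\<in>I. expectation (\<lambda>x. exp (l * \<xi> k x)))"
    by (rule indep_vars_lebesgue_integral[OF I indI int])
  also have "\<dots> \<le> (\<Prod>k\<in>I. exp (l\<^sup>2 * \<beta>\<^sup>2 / 2))"
    by (rule prod_mono) (use single in \<open>auto intro: integral_nonneg_AE\<close>)
  also have "\<dots> = exp (l\<^sup>2 * real (card I) * \<beta>\<^sup>2 / 2)"
    by (simp add: exp_of_nat_mult[symmetric] mult_ac)
  finally show ?thesis .
qed

lemma abs_powr_le_exp:
  fixes y q :: real
  assumes q: "q > 0"
  shows "\<bar>y\<bar> powr q \<le> q powr q * (exp y + exp (- y))"
proof -
  have "\<bar>y\<bar> / q \<le> exp (\<bar>y\<bar> / q)" using exp_ge_add_one_self[of "\<bar>y\<bar> / q"] by linarith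
  then have "(\<bar>y\<bar> / q) powr q \<le> exp (\<bar>y\<bar> / q) powr q"
    by (intro powr_mono2) (use q in auto)
  also have "exp (\<bar>y\<bar> / q) powr q = exp \<bar>y\<bar>"
    using q by (simp add: powr_def)
  also have "(\<bar>y\<bar> / q) powr q = \<bar>y\<bar> powr q / q powr q"
    using q by (simp add: powr_divide)
  finally have "\<bar>y\<bar> powr q \<le> q powr q * exp \<bar>y\<bar>"
    using q by (simp add: divide_le_eq mult.commute)
  also have "exp \<bar>y\<bar> \<le> exp y + exp (- y)"
    by (cases "y \<ge> 0") auto
  finally show ?thesis using q by (simp add: mult_left_mono)
qed

lemma abs_sum_le_card_mult:
  fixes \<xi> :: "nat \<Rightarrow> 'a \<Rightarrow> real"
  shows "(\<And>k. \<bar>\<xi> k x\<bar> \<le> \<beta>) \<Longrightarrow> \<bar>\<Sum>k\<in>I. \<xi> k x\<bar> \<le> real (card I) * \<beta>"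
  by (rule order_trans[OF sum_abs sum_bounded_above])

lemma (in prob_space) integrable_abs_sum_powr:
  fixes \<xi> :: "nat \<Rightarrow> 'a \<Rightarrow> real"
  assumes [measurable]: "\<And>k. \<xi> k \<in> borel_measurable M"
    and bnd: "\<And>k x. x \<in> space M \<Longrightarrow> \<bar>\<xi> k x\<bar> \<le> \<beta>" and q: "q > 0"
  shows "integrable M (\<lambda>x. \<bar>\<Sum>k\<in>I. \<xi> k x\<bar> powr q)"
proof (rule integrable_bounded[where B="(real (card I) * \<beta>) powr q"])
  fix x assume "x \<in> space M"
  then show "\<bar>\<bar>\<Sum>k\<in>I. \<xi> k x\<bar> powr q\<bar> \<le> (real (card I) * \<beta>) powr q"
    using q abs_sum_le_card_mult[of \<xi> x \<beta> I] bnd by (simp add: powr_mono2)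
qed measurable

lemma (in prob_space) expectation_exp_sum_pm_le:
  fixes \<xi> :: "nat \<Rightarrow> 'a \<Rightarrow> real"
  assumes indep: "indep_vars (\<lambda>_. borel) \<xi> UNIV"
    and bnd: "\<And>k x. x \<in> space M \<Longrightarrow> \<bar>\<xi> k x\<bar> \<le> \<beta>"
    and E0: "\<And>k. expectation (\<xi> k) = 0"
    and I: "finite I" and l: "l > 0"
  defines "S \<equiv> \<lambda>x. \<Sum>k\<in>I. \<xi> k x"
  shows "integrable M (\<lambda>x. exp (l * S x) + exp (- (l * S x)))"
    and "expectation (\<lambda>x. exp (l * S x) + exp (- (l * S x))) \<le> 2 * exp (l\<^sup>2 * real (card I) * \<beta>\<^sup>2 / 2)"
proof -
  have rv[measurable]: "\<And>k. \<xi> k \<in> borel_measurable M" using indep unfolding indep_vars_def by blast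
  have int: "integrable M (\<lambda>x. exp (c * S x))" for c
  proof (rule integrable_bounded[where B="exp (\<bar>c\<bar> * (real (card I) * \<beta>))"])
    fix x assume "x \<in> space M"
    have "c * S x \<le> \<bar>c\<bar> * \<bar>S x\<bar>" by (metis abs_ge_self abs_mult)
    also have "\<dots> \<le> \<bar>c\<bar> * (real (card I) * \<beta>)"
      using abs_sum_le_card_mult[of \<xi> x \<beta> I] bnd[OF \<open>x \<in> space M\<close>]
      unfolding S_def by (intro mult_left_mono) auto
    finally show "\<bar>exp (c * S x)\<bar> \<le> exp (\<bar>c\<bar> * (real (card I) * \<beta>))" by simp
  qed (simp add: S_def)
  show int_pm: "integrable M (\<lambda>x. exp (l * S x) + exp (- (l * S x)))"
    using int[of l] int[of "- l"] by simp
  have "indep_vars (\<lambda>_. borel) (\<lambda>k x. - \<xi> k x) UNIV"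
    by (rule indep_vars_compose2[OF indep]) simp
  from expectation_exp_sum_le[OF this _ _ I l, of \<beta>]
  have neg: "expectation (\<lambda>x. exp (- (l * S x))) \<le> exp (l\<^sup>2 * real (card I) * \<beta>\<^sup>2 / 2)"
    using bnd E0 unfolding S_def by (simp add: sum_negf)
  have "expectation (\<lambda>x. exp (l * S x) + exp (- (l * S x)))
      = expectation (\<lambda>x. exp (l * S x)) + expectation (\<lambda>x. exp (- (l * S x)))"
    using int[of l] int[of "- l"] by simp
  also have "\<dots> \<le> exp (l\<^sup>2 * real (card I) * \<beta>\<^sup>2 / 2) + exp (l\<^sup>2 * real (card I) * \<beta>\<^sup>2 / 2)"
    using expectation_exp_sum_le[OF indep bnd E0 I l] neg unfolding S_def by (intro add_mono) auto
  finally show "expectation (\<lambda>x. exp (l * S x) + exp (- (l * S x))) \<le> 2 * exp (l\<^sup>2 * real (card I) * \<beta>\<^sup>2 / 2)"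
    by simp
qed

text \<open>Scaling the sum by its standard deviation bound \<open>\<sigma>\<close> reduces the moment bound to the
  sub-Gaussian bound on the moment generating function, via \<open>|y|^q \<le> q^q (exp y + exp (-y))\<close>.\<close>

lemma (in prob_space) expectation_abs_sum_powr_le:
  fixes \<xi> :: "nat \<Rightarrow> 'a \<Rightarrow> real"
  assumes indep: "indep_vars (\<lambda>_. borel) \<xi> UNIV"
    and bnd: "\<And>k x. x \<in> space M \<Longrightarrow> \<bar>\<xi> k x\<bar> \<le> \<beta>"
    and E0: "\<And>k. expectation (\<xi> k) = 0"
    and I: "finite I" "I \<noteq> {}" and \<beta>: "\<beta> > 0" and q: "q > 0"
  shows "expectation (\<lambda>x. \<bar>\<Sum>k\<in>I. \<xi> k x\<bar> powr q)
           \<le> 2 * exp (1/2) * q powr q * (real (card I) * \<beta>\<^sup>2) powr (q/2)"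
proof -
  have rv: "\<And>k. \<xi> k \<in> borel_measurable M" using indep unfolding indep_vars_def by blast
  define \<sigma> where "\<sigma> = sqrt (real (card I) * \<beta>\<^sup>2)"
  define S where "S x = (\<Sum>k\<in>I. \<xi> k x)" for x
  have cI: "real (card I) > 0" using I by auto
  have \<sigma>: "\<sigma> > 0" unfolding \<sigma>_def using cI \<beta> by simp
  have \<sigma>q: "\<sigma> powr q = (real (card I) * \<beta>\<^sup>2) powr (q/2)"
    unfolding \<sigma>_def using cI \<beta> by (simp add: powr_half_sqrt[symmetric] powr_powr)
  have exponent: "(1/\<sigma>)\<^sup>2 * real (card I) * \<beta>\<^sup>2 / 2 = 1/2"
    unfolding \<sigma>_def power_divide using cI \<beta> by simp
  note mgf = expectation_exp_sum_pm_le[OF indep bnd E0 I(1), of "1/\<sigma>", folded S_def, unfolded exponent]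
  have pointwise: "\<bar>S x\<bar> powr q \<le> \<sigma> powr q * q powr q * (exp (1/\<sigma> * S x) + exp (- (1/\<sigma> * S x)))" for x
  proof -
    have "\<bar>S x\<bar> powr q = \<sigma> powr q * \<bar>1/\<sigma> * S x\<bar> powr q"
      using \<sigma> by (simp add: abs_divide powr_divide)
    also have "\<dots> \<le> \<sigma> powr q * (q powr q * (exp (1/\<sigma> * S x) + exp (- (1/\<sigma> * S x))))"
      by (intro mult_left_mono abs_powr_le_exp q) simp
    finally show ?thesis by (simp add: mult.assoc)
  qed
  have "expectation (\<lambda>x. \<bar>S x\<bar> powr q)
        \<le> expectation (\<lambda>x. \<sigma> powr q * q powr q * (exp (1/\<sigma> * S x) + exp (- (1/\<sigma> * S x))))"
    using integrable_abs_sum_powr[OF rv bnd q] mgf(1) \<sigma> unfolding S_def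
    by (intro integral_mono integrable_mult_right pointwise[unfolded S_def]) auto
  also have "\<dots> = \<sigma> powr q * q powr q * expectation (\<lambda>x. exp (1/\<sigma> * S x) + exp (- (1/\<sigma> * S x)))"
    by simp
  also have "\<dots> \<le> \<sigma> powr q * q powr q * (2 * exp (1/2))"
    using mgf(2) \<sigma> by (intro mult_left_mono) auto
  finally show ?thesis unfolding S_def \<sigma>q by (simp add: mult_ac)
qed

definition block_max :: "(nat \<Rightarrow> 'a \<Rightarrow> real) \<Rightarrow> nat \<Rightarrow> nat \<Rightarrow> 'a \<Rightarrow> real" where
  "block_max \<xi> s K x = Max ((\<lambda>j. \<bar>\<Sum>k\<in>{s..<s+j}. \<xi> k x\<bar>) ` {0..2^K})"

lemma block_max_ge: "j \<le> 2^K \<Longrightarrow> \<bar>\<Sum>k\<in>{s..<s+j}. \<xi> k x\<bar> \<le> block_max \<xi> s K x"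
  unfolding block_max_def by (rule Max_ge) auto

lemma block_max_nonneg: "0 \<le> block_max \<xi> s K x"
  using block_max_ge[where j=0 and K=K and s=s and \<xi>=\<xi> and x=x] by simp

lemma block_max_le:
  assumes "\<And>j. j \<le> 2^K \<Longrightarrow> \<bar>\<Sum>k\<in>{s..<s+j}. \<xi> k x\<bar> \<le> B"
  shows "block_max \<xi> s K x \<le> B"
  unfolding block_max_def using assms by (subst Max_le_iff) auto

lemma block_max_0: "block_max \<xi> s 0 x = \<bar>\<xi> s x\<bar>"
proof (rule antisym)
  show "block_max \<xi> s 0 x \<le> \<bar>\<xi> s x\<bar>"
  proof (rule block_max_le)
    fix j :: nat assume "j \<le> 2^0"
    then have "j = 0 \<or> j = 1" by auto
    then show "\<bar>\<Sum>k\<in>{s..<s+j}. \<xi> k x\<bar> \<le> \<bar>\<xi> s x\<bar>" by auto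
  qed
  show "\<bar>\<xi> s x\<bar> \<le> block_max \<xi> s 0 x"
    using block_max_ge[where j=1 and K=0 and s=s and \<xi>=\<xi> and x=x] by simp
qed

lemma block_max_Suc_le:
  "block_max \<xi> s (Suc K) x
     \<le> \<bar>\<Sum>k\<in>{s..<s+2^K}. \<xi> k x\<bar> + max (block_max \<xi> s K x) (block_max \<xi> (s+2^K) K x)"
proof (rule block_max_le)
  fix j :: nat assume j: "j \<le> 2 ^ Suc K"
  show "\<bar>\<Sum>k\<in>{s..<s+j}. \<xi> k x\<bar>
          \<le> \<bar>\<Sum>k\<in>{s..<s+2^K}. \<xi> k x\<bar> + max (block_max \<xi> s K x) (block_max \<xi> (s+2^K) K x)"
  proof (cases "j \<le> 2^K")
    case True
    then have "\<bar>\<Sum>k\<in>{s..<s+j}. \<xi> k x\<bar> \<le> block_max \<xi> s K x" by (rule block_max_ge)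
    then show ?thesis by linarith
  next
    case False
    define j' where "j' = j - 2^K"
    have j': "j = 2^K + j'" "j' \<le> 2^K" using False j unfolding j'_def by auto
    have "(\<Sum>k\<in>{s..<s+j}. \<xi> k x) = (\<Sum>k\<in>{s..<s+2^K}. \<xi> k x) + (\<Sum>k\<in>{s+2^K..<s+2^K+j'}. \<xi> k x)"
      unfolding j'(1) by (subst sum.atLeastLessThan_concat[symmetric]) (auto simp: add.assoc)
    also have "\<bar>\<dots>\<bar> \<le> \<bar>\<Sum>k\<in>{s..<s+2^K}. \<xi> k x\<bar> + \<bar>\<Sum>k\<in>{s+2^K..<s+2^K+j'}. \<xi> k x\<bar>"
      by (rule abs_triangle_ineq)
    also have "\<bar>\<Sum>k\<in>{s+2^K..<s+2^K+j'}. \<xi> k x\<bar> \<le> block_max \<xi> (s+2^K) K x"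
      by (rule block_max_ge) (fact j')
    finally show ?thesis by linarith
  qed
qed

lemma block_max_le_bound:
  assumes "\<And>k. \<bar>\<xi> k x\<bar> \<le> \<beta>"
  shows "block_max \<xi> s K x \<le> 2^K * \<beta>"
proof (rule block_max_le)
  fix j :: nat assume j: "j \<le> 2^K"
  have "\<bar>\<Sum>k\<in>{s..<s+j}. \<xi> k x\<bar> \<le> real j * \<beta>"
    using abs_sum_le_card_mult[of \<xi> x \<beta> "{s..<s+j}"] assms by simp
  also have "\<dots> \<le> 2^K * \<beta>"
  proof (rule mult_right_mono)
    show "real j \<le> 2^K" using j by (metis of_nat_le_iff of_nat_numeral of_nat_power)
  qed (use assms[of 0] in linarith)
  finally show "\<bar>\<Sum>k\<in>{s..<s+j}. \<xi> k x\<bar> \<le> 2^K * \<beta>" .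
qed

lemma borel_measurable_block_max [measurable]:
  assumes [measurable]: "\<And>k. \<xi> k \<in> borel_measurable M"
  shows "block_max \<xi> s K \<in> borel_measurable M"
proof -
  have "block_max \<xi> s K = (\<lambda>x. MAX j\<in>{0..2^K}. \<bar>\<Sum>k\<in>{s..<s+j}. \<xi> k x\<bar>)"
    unfolding block_max_def by (rule ext) simp
  also have "\<dots> \<in> borel_measurable M"
    by (rule borel_measurable_Max) auto
  finally show ?thesis .
qed

lemma powr_add_le_split:
  fixes x y q d :: real
  assumes q: "q > 0" and d: "d > 0" and x: "x \<ge> 0" and y: "y \<ge> 0"
  shows "(x + y) powr q \<le> (1 + d) powr q * x powr q + (1 + 1/d) powr q * y powr q"
proof (cases "y \<le> d * x")
  case True
  then have "x + y \<le> (1 + d) * x" by (simp add: algebra_simps)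
  then have "(x + y) powr q \<le> ((1 + d) * x) powr q" using q x y by (intro powr_mono2) auto
  also have "\<dots> = (1 + d) powr q * x powr q" using d x by (simp add: powr_mult)
  finally show ?thesis by (smt (verit) powr_ge_zero mult_nonneg_nonneg)
next
  case False
  then have "x + y \<le> (1 + 1/d) * y" using d by (simp add: field_simps)
  then have "(x + y) powr q \<le> ((1 + 1/d) * y) powr q" using q x y by (intro powr_mono2) auto
  also have "\<dots> = (1 + 1/d) powr q * y powr q" using d y by (simp add: powr_mult)
  finally show ?thesis by (smt (verit) powr_ge_zero mult_nonneg_nonneg)
qed

lemma max_powr_le: "(a::real) \<ge> 0 \<Longrightarrow> b \<ge> 0 \<Longrightarrow> max a b powr q \<le> a powr q + b powr q"
  by (cases "a \<le> b") (auto simp: max_def)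

lemma powr_le_one_plus_powr:
  fixes z p q :: real
  assumes "z \<ge> 0" "0 < p" "p \<le> q"
  shows "z powr p \<le> 1 + z powr q"
proof (cases "z \<le> 1")
  case True
  then have "z powr p \<le> 1" using assms by (simp add: powr_le1)
  then show ?thesis by (smt (verit) powr_ge_zero)
next
  case False
  then have "z powr p \<le> z powr q" using assms by (intro powr_mono) auto
  then show ?thesis by simp
qed

lemma powr_le_scaled_powr:
  fixes x y \<sigma> p q :: real
  assumes x: "0 \<le> x" "x \<le> y" and \<sigma>: "0 < \<sigma>" and p: "0 < p" "p \<le> q"
  shows "x powr p \<le> \<sigma> powr p + \<sigma> powr p / \<sigma> powr q * y powr q"
proof -
  have y: "y = \<sigma> * (y / \<sigma>)" and y0: "0 \<le> y / \<sigma>" using x \<sigma> by auto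
  have "x powr p \<le> y powr p" using x p by (intro powr_mono2) auto
  also have "\<dots> = \<sigma> powr p * (y / \<sigma>) powr p" by (subst y) (rule powr_mult)
  also have "\<dots> \<le> \<sigma> powr p * (1 + (y / \<sigma>) powr q)"
    by (rule mult_left_mono[OF powr_le_one_plus_powr[OF y0 p]]) simp
  also have "\<dots> = \<sigma> powr p + \<sigma> powr p / \<sigma> powr q * y powr q"
    using \<sigma> x by (simp add: powr_divide algebra_simps)
  finally show ?thesis .
qed

lemma power2_powr_half:
  assumes b: "(b::real) \<ge> 0"
  shows "(b\<^sup>2) powr (q/2) = b powr q"
proof (cases "b = 0")
  case False
  then have "b\<^sup>2 = b powr 2" using b by (simp add: powr_realpow)
  then show ?thesis by (simp add: powr_powr)
qed simp

lemma block_max_Suc_powr_le: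
  fixes \<xi> :: "nat \<Rightarrow> 'a \<Rightarrow> real"
  assumes q: "q > 0" and d: "d > 0"
  shows "block_max \<xi> s (Suc K) x powr q
     \<le> (1+d) powr q * (block_max \<xi> s K x powr q + block_max \<xi> (s+2^K) K x powr q)
       + (1+1/d) powr q * \<bar>\<Sum>k\<in>{s..<s+2^K}. \<xi> k x\<bar> powr q"
proof -
  let ?m = "max (block_max \<xi> s K x) (block_max \<xi> (s+2^K) K x)"
  let ?b = "\<bar>\<Sum>k\<in>{s..<s+2^K}. \<xi> k x\<bar>"
  have "block_max \<xi> s (Suc K) x powr q \<le> (?m + ?b) powr q"
    by (rule powr_mono2) (use q block_max_nonneg block_max_Suc_le[of \<xi> s K x] in auto)
  also have "\<dots> \<le> (1+d) powr q * ?m powr q + (1+1/d) powr q * ?b powr q"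
    by (rule powr_add_le_split[OF q d]) (auto simp: block_max_nonneg max_def)
  also have "\<dots> \<le> (1+d) powr q * (block_max \<xi> s K x powr q + block_max \<xi> (s+2^K) K x powr q)
       + (1+1/d) powr q * ?b powr q"
    by (intro add_right_mono mult_left_mono max_powr_le) (simp_all add: block_max_nonneg)
  finally show ?thesis .
qed

lemma (in prob_space) integrable_block_max_powr:
  fixes \<xi> :: "nat \<Rightarrow> 'a \<Rightarrow> real"
  assumes [measurable]: "\<And>k. \<xi> k \<in> borel_measurable M"
    and bnd: "\<And>k x. x \<in> space M \<Longrightarrow> \<bar>\<xi> k x\<bar> \<le> \<beta>" and q: "q > 0"
  shows "integrable M (\<lambda>x. block_max \<xi> s K x powr q)"
proof (rule integrable_bounded[where B="(2^K * \<beta>) powr q"])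
  fix x assume x: "x \<in> space M"
  have "block_max \<xi> s K x powr q \<le> (2^K * \<beta>) powr q"
    by (rule powr_mono2) (use q block_max_nonneg block_max_le_bound[of \<xi> x \<beta>] bnd[OF x] in auto)
  then show "\<bar>block_max \<xi> s K x powr q\<bar> \<le> (2^K * \<beta>) powr q" by simp
qed measurable

text \<open>Dyadic chaining: the maximum over a block of length \<open>2^(K+1)\<close> is bounded by the maxima over
  its two halves plus the sum over the first half. The recursion closes because for \<open>q > 2\<close> the
  factor \<open>2 (1 + d)^q\<close> can be made smaller than the growth \<open>2^(q/2)\<close> of the right-hand side.\<close>

lemma (in prob_space) expectation_block_max_powr_le:
  fixes \<xi> :: "nat \<Rightarrow> 'a \<Rightarrow> real"
  assumes indep: "indep_vars (\<lambda>_. borel) \<xi> UNIV"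
    and bnd: "\<And>k x. x \<in> space M \<Longrightarrow> \<bar>\<xi> k x\<bar> \<le> \<beta>"
    and E0: "\<And>k. expectation (\<xi> k) = 0"
    and \<beta>: "\<beta> > 0" and q: "q > 0" and d: "d > 0" and D: "1 \<le> D"
    and recursion: "2 * (1+d) powr q * D + (1+1/d) powr q * (2 * exp (1/2) * q powr q) \<le> 2 powr (q/2) * D"
  shows "expectation (\<lambda>x. block_max \<xi> s K x powr q) \<le> D * (2^K * \<beta>\<^sup>2) powr (q/2)"
proof -
  have rv[measurable]: "\<And>k. \<xi> k \<in> borel_measurable M" using indep unfolding indep_vars_def by blast
  have int_block_max: "integrable M (\<lambda>x. block_max \<xi> s K x powr q)" for s K
    by (rule integrable_block_max_powr[OF rv bnd q])
  show ?thesis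
  proof (induction K arbitrary: s)
    case 0
    have "expectation (\<lambda>x. block_max \<xi> s 0 x powr q) \<le> expectation (\<lambda>x. \<beta> powr q)"
    proof (rule integral_mono)
      fix x assume "x \<in> space M"
      then show "block_max \<xi> s 0 x powr q \<le> \<beta> powr q"
        unfolding block_max_0 using q bnd by (intro powr_mono2) auto
    qed (use int_block_max[of s 0] in simp_all)
    also have "\<dots> = (2^0 * \<beta>\<^sup>2) powr (q/2)" using \<beta> by (simp add: prob_space power2_powr_half)
    also have "\<dots> \<le> D * (2^0 * \<beta>\<^sup>2) powr (q/2)"
      using mult_right_mono[OF D powr_ge_zero] by simp
    finally show ?case .
  next
    case (Suc K)
    define u where "u = (2^K * \<beta>\<^sup>2) powr (q/2)"
    define blk where "blk x = \<bar>\<Sum>k\<in>{s..<s+2^K}. \<xi> k x\<bar> powr q" for x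
    have int_blk: "integrable M blk"
      unfolding blk_def by (rule integrable_abs_sum_powr[OF rv bnd q])
    have E_blk: "expectation blk \<le> 2 * exp (1/2) * q powr q * u"
      using expectation_abs_sum_powr_le[OF indep bnd E0 _ _ \<beta> q, where I="{s..<s+2^K}"]
      unfolding blk_def u_def by simp
    have "expectation (\<lambda>x. block_max \<xi> s (Suc K) x powr q)
        \<le> expectation (\<lambda>x. (1+d) powr q * (block_max \<xi> s K x powr q + block_max \<xi> (s+2^K) K x powr q)
                         + (1+1/d) powr q * blk x)"
      unfolding blk_def
      by (rule integral_mono[OF int_block_max _ block_max_Suc_powr_le[OF q d]])
        (intro Bochner_Integration.integrable_add integrable_mult_right int_block_max int_blk[unfolded blk_def])
    also have "\<dots> = (1+d) powr q * (expectation (\<lambda>x. block_max \<xi> s K x powr q)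
          + expectation (\<lambda>x. block_max \<xi> (s+2^K) K x powr q)) + (1+1/d) powr q * expectation blk"
      using int_block_max[of s K] int_block_max[of "s+2^K" K] int_blk by simp
    also have "\<dots> \<le> (1+d) powr q * (D * u + D * u) + (1+1/d) powr q * (2 * exp (1/2) * q powr q * u)"
      using Suc.IH[of s] Suc.IH[of "s+2^K"] E_blk unfolding u_def
      by (intro add_mono mult_left_mono) auto
    also have "\<dots> = (2 * (1+d) powr q * D + (1+1/d) powr q * (2 * exp (1/2) * q powr q)) * u"
      by (simp add: algebra_simps)
    also have "\<dots> \<le> (2 powr (q/2) * D) * u"
      by (rule mult_right_mono[OF recursion]) (simp add: u_def)
    also have "\<dots> = D * (2^Suc K * \<beta>\<^sup>2) powr (q/2)"
      unfolding u_def by (simp add: powr_mult[symmetric] mult_ac)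
    finally show ?case .
  qed
qed

definition chaining_const :: "real \<Rightarrow> real" where
  "chaining_const q = (let d = 2 powr ((q - 2) / (4 * q)) - 1 in
     max 1 ((1+1/d) powr q * (2 * exp (1/2) * q powr q) / (2 powr (q/2) - 2 * (1+d) powr q)))"

lemma chaining_const_ge_1: "1 \<le> chaining_const q"
  unfolding chaining_const_def Let_def by simp

lemma chaining_const_recursion:
  assumes q: "2 < q"
  obtains d where "0 < d"
    and "2 * (1+d) powr q * chaining_const q + (1+1/d) powr q * (2 * exp (1/2) * q powr q)
           \<le> 2 powr (q/2) * chaining_const q"
proof
  define d where "d = 2 powr ((q - 2) / (4 * q)) - 1"
  show d: "0 < d" unfolding d_def using q by simp
  have "2 * (1+d) powr q = 2 powr (1 + (q - 2) / 4)"
    unfolding d_def using q by (simp add: powr_powr powr_add)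
  also have "\<dots> < 2 powr (q/2)" using q by (simp add: field_simps)
  finally have gap: "0 < 2 powr (q/2) - 2 * (1+d) powr q" by simp
  have "(1+1/d) powr q * (2 * exp (1/2) * q powr q) / (2 powr (q/2) - 2 * (1+d) powr q)
          \<le> chaining_const q"
    unfolding chaining_const_def d_def[symmetric] Let_def by simp
  with gap show "2 * (1+d) powr q * chaining_const q + (1+1/d) powr q * (2 * exp (1/2) * q powr q)
           \<le> 2 powr (q/2) * chaining_const q"
    by (simp add: divide_le_eq algebra_simps)
qed

definition max_moment_const :: "real \<Rightarrow> real" where
  "max_moment_const p = (1 + chaining_const (p + 1)) * 2 powr (p/2)"

lemma max_moment_const_pos: "max_moment_const p > 0"
  unfolding max_moment_const_def using chaining_const_ge_1[of "p + 1"] by simp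

definition max_partial_sum :: "(nat \<Rightarrow> 'a \<Rightarrow> real) \<Rightarrow> nat \<Rightarrow> 'a \<Rightarrow> real" where
  "max_partial_sum \<xi> n x = Max ((\<lambda>i. \<bar>\<Sum>k\<in>{1..i}. \<xi> k x\<bar>) ` {0..n})"

lemma max_partial_sum_ge: "i \<le> n \<Longrightarrow> \<bar>\<Sum>k\<in>{1..i}. \<xi> k x\<bar> \<le> max_partial_sum \<xi> n x"
  unfolding max_partial_sum_def by (rule Max_ge) auto

lemma max_partial_sum_nonneg: "0 \<le> max_partial_sum \<xi> n x"
  using max_partial_sum_ge[of 0 n \<xi> x] by simp

lemma max_partial_sum_le:
  "(\<And>i. i \<le> n \<Longrightarrow> \<bar>\<Sum>k\<in>{1..i}. \<xi> k x\<bar> \<le> B) \<Longrightarrow> max_partial_sum \<xi> n x \<le> B"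
  unfolding max_partial_sum_def by (subst Max_le_iff) auto

lemma max_partial_sum_le_block_max: "n \<le> 2^K \<Longrightarrow> max_partial_sum \<xi> n x \<le> block_max \<xi> 1 K x"
proof (rule max_partial_sum_le)
  fix i assume "n \<le> 2^K" "i \<le> n"
  moreover have "{1..i} = {1..<1+i}" by auto
  ultimately show "\<bar>\<Sum>k\<in>{1..i}. \<xi> k x\<bar> \<le> block_max \<xi> 1 K x"
    using block_max_ge[where j=i and K=K and s=1 and \<xi>=\<xi> and x=x] by simp
qed

lemma max_partial_sum_le_bound:
  "(\<And>k. \<bar>\<xi> k x\<bar> \<le> \<beta>) \<Longrightarrow> max_partial_sum \<xi> n x \<le> real n * \<beta>"
proof (rule max_partial_sum_le)
  fix i assume bnd: "\<And>k. \<bar>\<xi> k x\<bar> \<le> \<beta>" and i: "i \<le> n"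
  have "\<bar>\<Sum>k\<in>{1..i}. \<xi> k x\<bar> \<le> (\<Sum>k\<in>{1..i}. \<beta>)"
    by (rule order_trans[OF sum_abs sum_mono]) (rule bnd)
  also have "\<dots> \<le> real n * \<beta>" using i bnd[of 0] by (auto intro: mult_right_mono)
  finally show "\<bar>\<Sum>k\<in>{1..i}. \<xi> k x\<bar> \<le> real n * \<beta>" .
qed

lemma borel_measurable_max_partial_sum [measurable]:
  "(\<And>k. \<xi> k \<in> borel_measurable M) \<Longrightarrow> max_partial_sum \<xi> n \<in> borel_measurable M"
  unfolding max_partial_sum_def by (rule borel_measurable_Max) auto

lemma (in prob_space) integrable_max_partial_sum_powr:
  fixes \<xi> :: "nat \<Rightarrow> 'a \<Rightarrow> real"
  assumes [measurable]: "\<And>k. \<xi> k \<in> borel_measurable M"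
    and bnd: "\<And>k x. x \<in> space M \<Longrightarrow> \<bar>\<xi> k x\<bar> \<le> \<beta>" and p: "p > 0"
  shows "integrable M (\<lambda>x. max_partial_sum \<xi> n x powr p)"
proof (rule integrable_bounded[where B="(real n * \<beta>) powr p"])
  fix x assume x: "x \<in> space M"
  have "max_partial_sum \<xi> n x powr p \<le> (real n * \<beta>) powr p"
    using p max_partial_sum_nonneg max_partial_sum_le_bound[where \<xi>=\<xi> and x=x and n=n, OF bnd[OF x]]
    by (intro powr_mono2) auto
  then show "\<bar>max_partial_sum \<xi> n x powr p\<bar> \<le> (real n * \<beta>) powr p" by simp
qed measurable

text \<open>The chaining bound needs an exponent above 2, so it is applied with \<open>q = p + 1\<close> and
  brought back to \<open>p\<close> via \<open>z^p \<le> 1 + z^q\<close> after normalising by \<open>\<sigma> = (2^K \<beta>\<^sup>2)^(1/2)\<close>.\<close>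

lemma (in prob_space) expectation_max_partial_sum_powr_le:
  fixes \<xi> :: "nat \<Rightarrow> 'a \<Rightarrow> real"
  assumes indep: "indep_vars (\<lambda>_. borel) \<xi> UNIV"
    and bnd: "\<And>k x. x \<in> space M \<Longrightarrow> \<bar>\<xi> k x\<bar> \<le> \<beta>"
    and E0: "\<And>k. expectation (\<xi> k) = 0"
    and \<beta>: "\<beta> > 0" and p: "p \<ge> 2" and n: "n \<ge> 1"
  shows "expectation (\<lambda>x. max_partial_sum \<xi> n x powr p) \<le> max_moment_const p * (real n * \<beta>\<^sup>2) powr (p/2)"
proof -
  have rv[measurable]: "\<And>k. \<xi> k \<in> borel_measurable M" using indep unfolding indep_vars_def by blast
  define q where "q = p + 1"
  define D where "D = chaining_const q"
  have q: "2 < q" "0 < q" "p \<le> q" and pp: "0 < p" using p unfolding q_def by auto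
  obtain K' where K': "2^K' \<le> n" "n < 2^(K'+1)" using ex_power_ivl1[of 2 n] n by auto
  define K where "K = K' + 1"
  have nK: "n \<le> 2^K" using K' unfolding K_def by simp
  have Kn: "real (2^K) \<le> 2 * real n"
    using K' unfolding K_def by (simp del: of_nat_power add: of_nat_power[symmetric])
  obtain d where d: "0 < d"
    and rec: "2 * (1+d) powr q * D + (1+1/d) powr q * (2 * exp (1/2) * q powr q) \<le> 2 powr (q/2) * D"
    using chaining_const_recursion[OF q(1)] unfolding D_def by blast
  define \<sigma> where "\<sigma> = (2^K * \<beta>\<^sup>2) powr (1/2)"
  have \<sigma>: "\<sigma> > 0" unfolding \<sigma>_def using \<beta> by simp
  have \<sigma>q: "\<sigma> powr q = (2^K * \<beta>\<^sup>2) powr (q/2)" "\<sigma> powr p = (2^K * \<beta>\<^sup>2) powr (p/2)"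
    unfolding \<sigma>_def by (simp_all add: powr_powr)
  have E_block: "expectation (\<lambda>x. block_max \<xi> 1 K x powr q) \<le> D * \<sigma> powr q"
    unfolding \<sigma>q D_def
    by (rule expectation_block_max_powr_le[OF indep bnd E0 \<beta> q(2) d chaining_const_ge_1 rec[unfolded D_def]])
  note int_block = integrable_block_max_powr[OF rv bnd q(2), where s=1 and K=K]
  have pointwise: "max_partial_sum \<xi> n x powr p \<le> \<sigma> powr p + (\<sigma> powr p / \<sigma> powr q) * block_max \<xi> 1 K x powr q"
    for x
    by (rule powr_le_scaled_powr[OF max_partial_sum_nonneg max_partial_sum_le_block_max[OF nK] \<sigma> pp q(3)])
  have int_max: "integrable M (\<lambda>x. max_partial_sum \<xi> n x powr p)"
    by (rule integrable_max_partial_sum_powr[OF rv bnd pp])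
  have int_rhs: "integrable M (\<lambda>x. \<sigma> powr p + (\<sigma> powr p / \<sigma> powr q) * block_max \<xi> 1 K x powr q)"
    by (intro Bochner_Integration.integrable_add integrable_mult_right int_block integrable_const)
  have "expectation (\<lambda>x. max_partial_sum \<xi> n x powr p)
      \<le> expectation (\<lambda>x. \<sigma> powr p + (\<sigma> powr p / \<sigma> powr q) * block_max \<xi> 1 K x powr q)"
    by (rule integral_mono[OF int_max int_rhs pointwise])
  also have "\<dots> = \<sigma> powr p + (\<sigma> powr p / \<sigma> powr q) * expectation (\<lambda>x. block_max \<xi> 1 K x powr q)"
    using int_block by (simp add: prob_space)
  also have "\<dots> \<le> \<sigma> powr p + (\<sigma> powr p / \<sigma> powr q) * (D * \<sigma> powr q)"
    using E_block by (intro add_left_mono mult_left_mono) auto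
  also have "\<dots> = (1 + D) * \<sigma> powr p" using \<sigma> by (simp add: field_simps)
  also have "\<sigma> powr p \<le> (2 * (real n * \<beta>\<^sup>2)) powr (p/2)"
    unfolding \<sigma>q using Kn \<beta> p by (intro powr_mono2) (auto intro!: mult_right_mono)
  also have "\<dots> = 2 powr (p/2) * (real n * \<beta>\<^sup>2) powr (p/2)" by (simp add: powr_mult)
  finally show ?thesis
    unfolding max_moment_const_def D_def q_def using chaining_const_ge_1[of "p + 1"]
    by (simp add: mult_ac)
qed

section \<open>The exact solution\<close>

definition sol_bound :: "real \<Rightarrow> real \<Rightarrow> real \<Rightarrow> real" where
  "sol_bound a b K = sqrt ((1 + K\<^sup>2) * exp (3 * K * (b - a)))"

definition slope_bound :: "real \<Rightarrow> real \<Rightarrow> real \<Rightarrow> real" where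
  "slope_bound a b K = K * (1 + sol_bound a b K)"

definition hoelder_const :: "real \<Rightarrow> real \<Rightarrow> real \<Rightarrow> real \<Rightarrow> real" where
  "hoelder_const a b K L = L * (1 + 3 * slope_bound a b K)"

lemma slope_bound_nonneg: "0 \<le> K \<Longrightarrow> 0 \<le> slope_bound a b K"
  unfolding slope_bound_def sol_bound_def by simp

lemma hoelder_const_pos: "0 \<le> K \<Longrightarrow> 0 < L \<Longrightarrow> 0 < hoelder_const a b K L"
  unfolding hoelder_const_def using slope_bound_nonneg[of K a b] by (simp add: add_pos_nonneg)

lemma inner_le_of_norm_le_linear:
  fixes x y :: "'a::real_inner"
  assumes y: "norm y \<le> K * (1 + norm x)" and K: "0 \<le> K"
  shows "2 * (x \<bullet> y) \<le> 3 * K * (1 + x \<bullet> x)"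
proof -
  have "x \<bullet> y \<le> norm x * (K * (1 + norm x))"
    using norm_cauchy_schwarz[of x y] mult_left_mono[OF y norm_ge_zero[of x]] by linarith
  moreover have "2 * (norm x * (K * (1 + norm x))) \<le> K * (3 + 3 * (norm x)\<^sup>2)"
  proof -
    have "0 \<le> K * (norm x - 1)\<^sup>2" using K by simp
    then show ?thesis using K by (simp add: power2_eq_square algebra_simps)
  qed
  ultimately show ?thesis by (simp add: power2_norm_eq_inner algebra_simps)
qed

lemma le_powr_of_le_one:
  fixes u r :: real
  assumes "0 \<le> u" "u \<le> 1" "0 < r" "r \<le> 1"
  shows "u \<le> u powr r"
proof (cases "u = 0")
  case False
  then have "u powr 1 \<le> u powr r" using assms by (intro powr_mono') auto
  then show ?thesis using False assms by simp
qed simp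

locale ivp =
  fixes a b rho K L :: real and eta :: "'a::euclidean_space"
    and f :: "real \<Rightarrow> 'a \<Rightarrow> 'a" and z :: "real \<Rightarrow> 'a"
  assumes ab: "a < b" and rho: "0 < rho" "rho \<le> 1" and K: "0 < K" and L: "0 < L"
    and F: "F_class a b rho K L eta f" and z_init: "z a = eta"
    and z_solves: "\<forall>t\<in>{a..b}. (z has_vector_derivative f t (z t)) (at t within {a..b})"
begin

lemma norm_eta_le: "norm eta \<le> K"
  using F unfolding F_class_def by blast

lemma continuous_on_f: "continuous_on ({a..b} \<times> UNIV) (\<lambda>(t, x). f t x)"
  using F unfolding F_class_def by blast

lemma norm_f_le: "t \<in> {a..b} \<Longrightarrow> norm (f t x) \<le> K * (1 + norm x)"
  using F unfolding F_class_def by blast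

lemma f_hoelder: "t \<in> {a..b} \<Longrightarrow> s \<in> {a..b} \<Longrightarrow> norm (f t x - f s x) \<le> L * \<bar>t - s\<bar> powr rho"
  using F unfolding F_class_def by blast

lemma f_lipschitz: "t \<in> {a..b} \<Longrightarrow> norm (f t x - f t y) \<le> L * norm (x - y)"
  using F unfolding F_class_def by blast

lemma z_has_vector_derivative_within:
  "t \<in> S \<Longrightarrow> S \<subseteq> {a..b} \<Longrightarrow> (z has_vector_derivative f t (z t)) (at t within S)"
  using z_solves by (auto intro: has_vector_derivative_within_subset)

lemma z_has_vector_derivative_at:
  "a < t \<Longrightarrow> t < b \<Longrightarrow> (z has_vector_derivative f t (z t)) (at t)"
  using z_has_vector_derivative_within[of t "{a..b}"] by (simp add: at_within_Icc_at)

lemma continuous_on_z: "continuous_on {a..b} z"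
  using z_solves unfolding continuous_on_eq_continuous_within
  by (auto intro: has_vector_derivative_continuous)

lemma energy_has_real_derivative:
  assumes "a < x" "x < b"
  shows "((\<lambda>s. exp (- 3 * K * (s - a)) * (1 + z s \<bullet> z s)) has_real_derivative
           exp (- 3 * K * (x - a)) * (2 * (z x \<bullet> f x (z x)) - 3 * K * (1 + z x \<bullet> z x))) (at x)"
proof -
  have dz: "(z has_derivative (\<lambda>h. h *\<^sub>R f x (z x))) (at x)"
    using z_has_vector_derivative_at[OF assms] unfolding has_vector_derivative_def .
  have "((\<lambda>s. z s \<bullet> z s) has_real_derivative 2 * (z x \<bullet> f x (z x))) (at x)"
    unfolding has_field_derivative_def
    by (rule has_derivative_eq_rhs[OF has_derivative_inner[OF dz dz]])
      (auto simp: inner_commute algebra_simps fun_eq_iff)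
  then have "((\<lambda>s. exp (- 3 * K * (s - a)) * (1 + z s \<bullet> z s)) has_real_derivative
      exp (- 3 * K * (x - a)) * (- 3 * K * (1 - 0)) * (1 + z x \<bullet> z x)
        + (0 + 2 * (z x \<bullet> f x (z x))) * exp (- 3 * K * (x - a))) (at x)"
    by (intro DERIV_mult DERIV_fun_exp DERIV_cmult DERIV_diff DERIV_add DERIV_ident DERIV_const)
  then show ?thesis by (rule DERIV_cong) (simp add: algebra_simps)
qed

text \<open>The energy \<open>exp (-3 K (t - a)) (1 + |z t|\<^sup>2)\<close> is non-increasing, by the linear growth
  bound on \<open>f\<close>.\<close>

lemma z_energy_le:
  assumes t: "t \<in> {a..b}"
  shows "1 + (norm (z t))\<^sup>2 \<le> (1 + K\<^sup>2) * exp (3 * K * (t - a))"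
proof -
  define \<psi> where "\<psi> s = exp (- 3 * K * (s - a)) * (1 + z s \<bullet> z s)" for s
  have "\<psi> t \<le> \<psi> a"
  proof (rule DERIV_nonpos_imp_decreasing_open[where f=\<psi>])
    show "a \<le> t" using t by simp
    show "continuous_on {a..t} \<psi>" unfolding \<psi>_def
      by (intro continuous_intros continuous_on_subset[OF continuous_on_z]) (use t in auto)
    fix x assume x: "a < x" "x < t"
    have "2 * (z x \<bullet> f x (z x)) \<le> 3 * K * (1 + z x \<bullet> z x)"
      using inner_le_of_norm_le_linear[OF norm_f_le] K x t by auto
    then show "\<exists>y. (\<psi> has_real_derivative y) (at x) \<and> y \<le> 0"
      using energy_has_real_derivative[of x] x t unfolding \<psi>_def
      by (intro exI conjI) (auto intro: mult_nonneg_nonpos)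
  qed
  also have "\<psi> a \<le> 1 + K\<^sup>2"
    unfolding \<psi>_def using norm_eta_le by (simp add: z_init power2_norm_eq_inner[symmetric] power_mono)
  finally have "exp (- 3 * K * (t - a)) * (1 + (norm (z t))\<^sup>2) \<le> 1 + K\<^sup>2"
    unfolding \<psi>_def by (simp add: power2_norm_eq_inner)
  then have "exp (3 * K * (t - a)) * (exp (- 3 * K * (t - a)) * (1 + (norm (z t))\<^sup>2))
      \<le> exp (3 * K * (t - a)) * (1 + K\<^sup>2)"
    by (rule mult_left_mono) simp
  moreover have "exp (3 * K * (t - a)) * exp (- 3 * K * (t - a)) = 1"
    by (simp flip: exp_add)
  then have "exp (3 * K * (t - a)) * (exp (- 3 * K * (t - a)) * (1 + (norm (z t))\<^sup>2))
      = 1 + (norm (z t))\<^sup>2"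
    by (simp add: mult.assoc[symmetric])
  ultimately show ?thesis by (metis mult.commute)
qed

lemma norm_z_le: "t \<in> {a..b} \<Longrightarrow> norm (z t) \<le> sol_bound a b K"
proof -
  assume t: "t \<in> {a..b}"
  have "(norm (z t))\<^sup>2 \<le> (1 + K\<^sup>2) * exp (3 * K * (t - a))" using z_energy_le[OF t] by simp
  also have "\<dots> \<le> (1 + K\<^sup>2) * exp (3 * K * (b - a))"
    using t K by (intro mult_left_mono) (auto intro!: mult_left_mono)
  finally show ?thesis unfolding sol_bound_def by (rule real_le_rsqrt)
qed

lemma norm_f_z_le: "t \<in> {a..b} \<Longrightarrow> norm (f t (z t)) \<le> slope_bound a b K"
  unfolding slope_bound_def using norm_f_le norm_z_le K
  by (meson add_left_mono mult_left_mono order.trans less_imp_le)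

lemma z_lipschitz:
  assumes x: "x \<in> {a..b}" and y: "y \<in> {a..b}"
  shows "norm (z y - z x) \<le> 3 * slope_bound a b K * \<bar>y - x\<bar>"
proof -
  define G where "G = slope_bound a b K"
  have S: "closed_segment x y \<subseteq> {a..b}"
    using x y by (auto simp: closed_segment_eq_real_ivl split: if_splits)
  have "norm (z y - z x - (y - x) *\<^sub>R f x (z x)) \<le> norm (y - x) * (2 * G)"
  proof (rule vector_differentiable_bound_linearization[where S="closed_segment x y"])
    show "\<And>t. t \<in> closed_segment x y \<Longrightarrow> (z has_vector_derivative f t (z t)) (at t within closed_segment x y)"
      using z_has_vector_derivative_within S by blast
    fix t assume "t \<in> closed_segment x y"
    then have "norm (f t (z t)) \<le> G" "norm (f x (z x)) \<le> G"
      using S x norm_f_z_le unfolding G_def by auto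
    then show "norm (f t (z t) - f x (z x)) \<le> 2 * G"
      using norm_triangle_ineq4[of "f t (z t)" "f x (z x)"] by simp
  qed auto
  moreover have "norm ((y - x) *\<^sub>R f x (z x)) \<le> \<bar>y - x\<bar> * G"
    using norm_f_z_le[OF x] unfolding G_def by (simp add: mult_left_mono)
  ultimately show ?thesis
    using norm_triangle_ineq[of "z y - z x - (y - x) *\<^sub>R f x (z x)" "(y - x) *\<^sub>R f x (z x)"]
    unfolding G_def by (simp add: algebra_simps)
qed

lemma f_z_hoelder:
  assumes t: "t \<in> {a..b}" and c: "c \<in> {a..b}" and tc: "\<bar>t - c\<bar> \<le> 1"
  shows "norm (f t (z t) - f c (z c)) \<le> hoelder_const a b K L * \<bar>t - c\<bar> powr rho"
proof -
  define G where "G = slope_bound a b K"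
  define u where "u = \<bar>t - c\<bar>"
  have G: "0 \<le> G" unfolding G_def using K by (simp add: slope_bound_nonneg)
  have "norm (f c (z t) - f c (z c)) \<le> L * norm (z t - z c)" by (rule f_lipschitz[OF c])
  also have "\<dots> \<le> L * (3 * G * u)" using z_lipschitz[OF c t] L unfolding G_def u_def by simp
  also have "\<dots> \<le> L * (3 * G * u powr rho)"
    using le_powr_of_le_one[of u rho] tc rho L G unfolding u_def by (intro mult_left_mono) auto
  finally have "norm (f c (z t) - f c (z c)) \<le> L * (3 * G * u powr rho)" .
  moreover have "norm (f t (z t) - f c (z t)) \<le> L * u powr rho" unfolding u_def by (rule f_hoelder[OF t c])
  ultimately show ?thesis
    using norm_triangle_ineq[of "f t (z t) - f c (z t)" "f c (z t) - f c (z c)"]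
    unfolding hoelder_const_def G_def u_def by (simp add: algebra_simps)
qed

lemma z_linearization_error:
  assumes xy: "x \<le> y" "y - x \<le> 1" and x: "x \<in> {a..b}" and y: "y \<in> {a..b}" and c: "c \<in> {x..y}"
  shows "norm (z y - z x - (y - x) *\<^sub>R f c (z c)) \<le> hoelder_const a b K L * (y - x) powr rho * (y - x)"
proof -
  have S: "{x..y} \<subseteq> {a..b}" using x y by auto
  have "norm (z y - z x - (y - x) *\<^sub>R f c (z c)) \<le> norm (y - x) * (hoelder_const a b K L * (y - x) powr rho)"
  proof (rule vector_differentiable_bound_linearization[where S="{x..y}"])
    show "\<And>t. t \<in> {x..y} \<Longrightarrow> (z has_vector_derivative f t (z t)) (at t within {x..y})"
      using z_has_vector_derivative_within S by blast
    fix t assume t: "t \<in> {x..y}"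
    have tc: "\<bar>t - c\<bar> \<le> y - x" using t c by auto
    have "norm (f t (z t) - f c (z c)) \<le> hoelder_const a b K L * \<bar>t - c\<bar> powr rho"
      by (rule f_z_hoelder) (use t c S tc xy in auto)
    also have "\<dots> \<le> hoelder_const a b K L * (y - x) powr rho"
      using hoelder_const_pos[of K L a b] K L rho tc by (intro mult_left_mono powr_mono2) auto
    finally show "norm (f t (z t) - f c (z c)) \<le> hoelder_const a b K L * (y - x) powr rho" .
  qed (use xy c in \<open>auto simp: closed_segment_eq_real_ivl\<close>)
  then show ?thesis using xy by (simp add: mult_ac)
qed

lemma continuous_on_f_z_comp:
  assumes "continuous_on S \<phi>" and "\<phi> ` S \<subseteq> {a..b}"
  shows "continuous_on S (\<lambda>\<sigma>. f (\<phi> \<sigma>) (z (\<phi> \<sigma>)))"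
proof -
  have "continuous_on S (\<lambda>\<sigma>. (\<phi> \<sigma>, z (\<phi> \<sigma>)))"
    by (intro continuous_on_Pair assms(1) continuous_on_compose2[OF continuous_on_z assms])
  from continuous_on_compose2[OF continuous_on_f this] assms(2)
  show ?thesis by auto
qed

lemma borel_measurable_f_comp:
  assumes A: "A \<in> borel_measurable M" and X: "X \<in> borel_measurable M"
    and A_in: "\<And>\<omega>. \<omega> \<in> space M \<Longrightarrow> A \<omega> \<in> {a..b}"
  shows "(\<lambda>\<omega>. f (A \<omega>) (X \<omega>)) \<in> borel_measurable M"
proof -
  define g where "g p = f (max a (min b (fst p))) (snd p)" for p :: "real \<times> 'a"
  have "continuous_on UNIV (\<lambda>p::real \<times> 'a. (\<lambda>(t, x). f t x) (max a (min b (fst p)), snd p))"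
    by (rule continuous_on_compose2[OF continuous_on_f]) (use ab in \<open>auto intro!: continuous_intros\<close>)
  then have "g \<in> borel \<Otimes>\<^sub>M borel \<rightarrow>\<^sub>M borel"
    unfolding borel_prod g_def by (intro borel_measurable_continuous_onI) simp
  from measurable_compose[OF measurable_Pair[OF A X] this]
  have "(\<lambda>\<omega>. g (A \<omega>, X \<omega>)) \<in> borel_measurable M" .
  moreover have "g (A \<omega>, X \<omega>) = f (A \<omega>) (X \<omega>)" if "\<omega> \<in> space M" for \<omega>
  proof -
    have "max a (min b (A \<omega>)) = A \<omega>" using A_in[OF that] by auto
    then show ?thesis unfolding g_def by simp
  qed
  ultimately show ?thesis by (simp cong: measurable_cong)
qed

end

section \<open>The implicit randomized scheme\<close>

lemma contraction_iterates_tendsto: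
  fixes F :: "'a::metric_space \<Rightarrow> 'a"
  assumes contr: "\<And>x y. dist (F x) (F y) \<le> c * dist x y" and c: "0 \<le> c" "c < 1"
    and fixpoint: "F w = w"
  shows "(\<lambda>m. (F ^^ m) v) \<longlonglongrightarrow> w"
proof -
  have bound: "dist ((F ^^ m) v) w \<le> c ^ m * dist v w" for m
  proof (induction m)
    case (Suc m)
    have "dist ((F ^^ Suc m) v) w = dist (F ((F ^^ m) v)) (F w)" using fixpoint by simp
    also have "\<dots> \<le> c * dist ((F ^^ m) v) w" by (rule contr)
    also have "\<dots> \<le> c * (c ^ m * dist v w)" by (rule mult_left_mono[OF Suc.IH c(1)])
    finally show ?case by (simp add: mult_ac)
  qed simp
  have "(\<lambda>m. c ^ m * dist v w) \<longlonglongrightarrow> 0"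
    by (intro tendsto_mult_left_zero LIMSEQ_power_zero) (use c in simp)
  then show ?thesis
    by (rule metric_tendsto_imp_tendsto[OF _ always_eventually]) (use bound c in \<open>simp add: abs_mult\<close>)
qed

lemma discrete_gronwall:
  fixes x :: "nat \<Rightarrow> real"
  assumes x: "\<And>j. j \<le> N \<Longrightarrow> x j \<le> \<alpha> + \<beta> * (\<Sum>k<j. x k)" and \<alpha>: "\<alpha> \<ge> 0" and \<beta>: "\<beta> \<ge> 0"
  shows "j \<le> N \<Longrightarrow> x j \<le> \<alpha> * (1 + \<beta>) ^ j"
proof (induction j rule: less_induct)
  case (less j)
  have geometric: "\<beta> * (\<Sum>k<j. (1 + \<beta>) ^ k) = (1 + \<beta>) ^ j - 1"
    by (induction j) (simp_all add: algebra_simps)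
  have "x j \<le> \<alpha> + \<beta> * (\<Sum>k<j. x k)" using x less.prems by blast
  also have "\<dots> \<le> \<alpha> + \<beta> * (\<Sum>k<j. \<alpha> * (1 + \<beta>) ^ k)"
    using less.IH less.prems \<beta> by (intro add_left_mono mult_left_mono sum_mono) auto
  also have "\<dots> = \<alpha> * (1 + \<beta> * (\<Sum>k<j. (1 + \<beta>) ^ k))"
    by (simp add: sum_distrib_left algebra_simps)
  also have "\<dots> = \<alpha> * (1 + \<beta>) ^ j"
    using geometric by simp
  finally show ?case .
qed

lemma one_plus_power_le_exp: "(\<beta>::real) \<ge> 0 \<Longrightarrow> (1 + \<beta>) ^ j \<le> exp (\<beta> * real j)"
  using power_mono[of "1 + \<beta>" "exp \<beta>" j] exp_ge_add_one_self[of \<beta>]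
  by (simp add: exp_of_nat_mult[symmetric] mult.commute)

text \<open>\<open>grid j\<close> is the grid point \<open>t_j\<close>; step \<open>j + 1\<close> evaluates its implicit stage at
  \<open>\<theta>_(j+1) = grid j + h \<tau>_(j+1)\<close>.\<close>

locale rk2_grid = ivp +
  fixes n :: nat and h :: real
  assumes h_def: "h = (b - a) / real n" and n_pos: "1 \<le> n" and h_lt_1: "h < 1" and Lh: "L * h < 1"
begin

abbreviation grid :: "nat \<Rightarrow> real" where "grid j \<equiv> a + real j * h"

abbreviation defect_size :: real where "defect_size \<equiv> hoelder_const a b K L * h powr rho * h"

definition stage_map :: "nat \<Rightarrow> real \<Rightarrow> 'a \<Rightarrow> 'a \<Rightarrow> 'a" where
  "stage_map j \<sigma> v w = v + h *\<^sub>R f (grid j + h * \<sigma>) ((1 - \<sigma>) *\<^sub>R v + \<sigma> *\<^sub>R w)"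

lemma h_pos: "0 < h"
  using h_def n_pos ab by simp

lemma n_mult_h: "real n * h = b - a"
  using h_def n_pos by simp

lemma grid_in: "j \<le> n \<Longrightarrow> grid j \<in> {a..b}"
  using n_mult_h h_pos mult_right_mono[of "real j" "real n" h] by auto

lemma stage_in:
  assumes j: "j < n" and \<sigma>: "\<sigma> \<in> {0..1}"
  shows "grid j + h * \<sigma> \<in> {a..b}"
proof -
  have "grid (Suc j) \<in> {a..b}" using j by (intro grid_in) simp
  moreover have "0 \<le> h * \<sigma>" "h * \<sigma> \<le> h" "0 \<le> real j * h"
    using \<sigma> h_pos by (auto simp: mult_left_le)
  ultimately show ?thesis by (auto simp: algebra_simps)
qed

lemma dist_stage_map_le:
  assumes j: "j < n" and \<sigma>: "\<sigma> \<in> {0..1}"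
  shows "dist (stage_map j \<sigma> v x) (stage_map j \<sigma> v y) \<le> L * h * dist x y"
proof -
  let ?\<theta> = "grid j + h * \<sigma>"
  have "dist (stage_map j \<sigma> v x) (stage_map j \<sigma> v y)
      = h * norm (f ?\<theta> ((1 - \<sigma>) *\<^sub>R v + \<sigma> *\<^sub>R x) - f ?\<theta> ((1 - \<sigma>) *\<^sub>R v + \<sigma> *\<^sub>R y))"
    unfolding stage_map_def dist_norm using h_pos by (simp add: scaleR_diff_right[symmetric])
  also have "\<dots> \<le> h * (L * (\<sigma> * norm (x - y)))"
    using f_lipschitz[OF stage_in[OF j \<sigma>], of "(1 - \<sigma>) *\<^sub>R v + \<sigma> *\<^sub>R x" "(1 - \<sigma>) *\<^sub>R v + \<sigma> *\<^sub>R y"]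
      h_pos \<sigma> by (simp add: scaleR_diff_right[symmetric])
  also have "\<dots> \<le> h * (L * norm (x - y))"
    using h_pos L \<sigma> by (intro mult_left_mono) (auto simp: mult_left_le_one_le)
  finally show ?thesis by (simp add: dist_norm mult_ac)
qed

lemma stage_map_unique_fixpoint:
  "j < n \<Longrightarrow> \<sigma> \<in> {0..1} \<Longrightarrow> \<exists>!w. w = stage_map j \<sigma> v w"
  using banach_fix_type[of "L * h" "stage_map j \<sigma> v"] dist_stage_map_le L h_pos Lh
  by (metis mult_nonneg_nonneg less_imp_le)

lemma rk2_implicit_Suc:
  "rk2_implicit a h s eta f (Suc j) = (THE w. w = stage_map j (s (Suc j)) (rk2_implicit a h s eta f j) w)"
  by (simp add: stage_map_def Let_def)

lemma rk2_implicit_step: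
  assumes "j < n" and "s (Suc j) \<in> {0..1}"
  shows "rk2_implicit a h s eta f (Suc j) = stage_map j (s (Suc j)) (rk2_implicit a h s eta f j)
           (rk2_implicit a h s eta f (Suc j))"
  unfolding rk2_implicit_Suc by (rule theI'[OF stage_map_unique_fixpoint[OF assms]])

text \<open>Measurability of the implicitly defined iterates: each one is the limit of the Picard
  iterates of the contraction \<open>stage_map\<close>, which are measurable.\<close>

lemma borel_measurable_rk2_implicit:
  fixes M :: "'w measure" and T :: "nat \<Rightarrow> 'w \<Rightarrow> real"
  assumes T_meas: "\<And>i. T i \<in> borel_measurable M" and T01: "\<And>i \<omega>. T i \<omega> \<in> {0..1}"
  shows "j \<le> n \<Longrightarrow> (\<lambda>\<omega>. rk2_implicit a h (\<lambda>i. T i \<omega>) eta f j) \<in> borel_measurable M"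
proof (induction j)
  case (Suc j)
  then have j: "j < n" by simp
  define V where "V \<omega> = rk2_implicit a h (\<lambda>i. T i \<omega>) eta f j" for \<omega>
  define F where "F \<omega> = stage_map j (T (Suc j) \<omega>) (V \<omega>)" for \<omega>
  have V_meas: "V \<in> borel_measurable M" unfolding V_def using Suc by simp
  have stage_meas: "(\<lambda>\<omega>. grid j + h * T (Suc j) \<omega>) \<in> borel_measurable M" using T_meas by measurable
  have iterates_meas: "(\<lambda>\<omega>. (F \<omega> ^^ m) (V \<omega>)) \<in> borel_measurable M" for m
  proof (induction m)
    case (Suc m)
    have "(\<lambda>\<omega>. (1 - T (Suc j) \<omega>) *\<^sub>R V \<omega> + T (Suc j) \<omega> *\<^sub>R (F \<omega> ^^ m) (V \<omega>)) \<in> borel_measurable M"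
      using T_meas V_meas Suc.IH by measurable
    from borel_measurable_f_comp[OF stage_meas this stage_in[OF j T01]]
    show ?case unfolding F_def funpow.simps o_def stage_map_def using V_meas by measurable
  qed (use V_meas in simp)
  have "(\<lambda>m. (F \<omega> ^^ m) (V \<omega>)) \<longlonglongrightarrow> rk2_implicit a h (\<lambda>i. T i \<omega>) eta f (Suc j)" for \<omega>
    unfolding F_def V_def
  proof (rule contraction_iterates_tendsto)
    show "dist (stage_map j (T (Suc j) \<omega>) (rk2_implicit a h (\<lambda>i. T i \<omega>) eta f j) x)
            (stage_map j (T (Suc j) \<omega>) (rk2_implicit a h (\<lambda>i. T i \<omega>) eta f j) y) \<le> L * h * dist x y" for x y
      by (rule dist_stage_map_le[OF j T01])
    show "0 \<le> L * h" "L * h < 1" using L h_pos Lh by auto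
    show "stage_map j (T (Suc j) \<omega>) (rk2_implicit a h (\<lambda>i. T i \<omega>) eta f j)
            (rk2_implicit a h (\<lambda>i. T i \<omega>) eta f (Suc j)) = rk2_implicit a h (\<lambda>i. T i \<omega>) eta f (Suc j)"
      using rk2_implicit_step[OF j, of "\<lambda>i. T i \<omega>"] T01 by simp
  qed
  then show ?case by (rule borel_measurable_LIMSEQ_metric[OF iterates_meas])
qed simp

text \<open>The error splits into the local defects \<open>local_defect k \<tau>_k\<close>, which are centred random
  variables of size \<open>O(h^(\<rho>+1))\<close>, and \<open>h\<close> times the stage errors, which are controlled by the
  global error itself.\<close>

definition local_defect :: "nat \<Rightarrow> real \<Rightarrow> 'a" where
  "local_defect k \<sigma> = z (grid k) - z (grid (k - 1))
      - h *\<^sub>R f (grid (k - 1) + h * \<sigma>) (z (grid (k - 1) + h * \<sigma>))"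

definition stage_error :: "(nat \<Rightarrow> real) \<Rightarrow> nat \<Rightarrow> 'a" where
  "stage_error s k = f (grid (k - 1) + h * s k) (z (grid (k - 1) + h * s k))
     - f (grid (k - 1) + h * s k)
         ((1 - s k) *\<^sub>R rk2_implicit a h s eta f (k - 1) + s k *\<^sub>R rk2_implicit a h s eta f k)"

lemma hoelder_step_le:
  "0 \<le> u \<Longrightarrow> u \<le> h \<Longrightarrow> hoelder_const a b K L * u powr rho * u \<le> defect_size"
  using hoelder_const_pos[of K L a b] K L rho
  by (intro mult_mono mult_left_mono powr_mono2) auto

lemma norm_local_defect_le:
  assumes k: "1 \<le> k" "k \<le> n" and \<sigma>: "\<sigma> \<in> {0..1}"
  shows "norm (local_defect k \<sigma>) \<le> defect_size"
proof -
  have step: "grid k - grid (k - 1) = h" using k by (simp add: of_nat_diff algebra_simps)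
  have "h * \<sigma> \<le> h" "0 \<le> h * \<sigma>" using \<sigma> h_pos by (simp_all add: mult_left_le)
  then have hs: "grid (k - 1) + h * \<sigma> \<in> {grid (k - 1)..grid k}" using step by simp
  have "norm (z (grid k) - z (grid (k - 1))
      - (grid k - grid (k - 1)) *\<^sub>R f (grid (k - 1) + h * \<sigma>) (z (grid (k - 1) + h * \<sigma>)))
      \<le> hoelder_const a b K L * (grid k - grid (k - 1)) powr rho * (grid k - grid (k - 1))"
    using k \<sigma> h_pos h_lt_1 step hs
    by (intro z_linearization_error grid_in) auto
  then show ?thesis unfolding step local_defect_def .
qed

lemma interpolation_error_le:
  assumes j: "j < n" and \<sigma>: "\<sigma> \<in> {0..1}"
  shows "norm (z (grid j + h * \<sigma>) - (1 - \<sigma>) *\<^sub>R z (grid j) - \<sigma> *\<^sub>R z (grid (Suc j)))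
     \<le> 2 * defect_size"
proof -
  define x y \<theta> where "x = grid j" and "y = grid (Suc j)" and "\<theta> = grid j + h * \<sigma>"
  define v where "v = f \<theta> (z \<theta>)"
  define A B where "A = z \<theta> - z x - (\<theta> - x) *\<^sub>R v" and "B = z y - z \<theta> - (y - \<theta>) *\<^sub>R v"
  have tx: "\<theta> - x = h * \<sigma>" and yt: "y - \<theta> = h * (1 - \<sigma>)"
    unfolding \<theta>_def x_def y_def by (simp_all add: algebra_simps)
  have hs: "h * \<sigma> \<le> h" "0 \<le> h * \<sigma>" "h * (1 - \<sigma>) \<le> h" "0 \<le> h * (1 - \<sigma>)"
    using \<sigma> h_pos by (auto simp: mult_left_le)
  have in_ab: "x \<in> {a..b}" "y \<in> {a..b}" "\<theta> \<in> {a..b}"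
    unfolding x_def y_def \<theta>_def using j by (intro grid_in stage_in[OF j \<sigma>]; simp)+
  have "norm A \<le> defect_size"
    using z_linearization_error[of x \<theta> \<theta>] hoelder_step_le[of "\<theta> - x"] tx hs h_lt_1 in_ab
    unfolding A_def v_def by auto
  moreover have "norm B \<le> defect_size"
    using z_linearization_error[of \<theta> y \<theta>] hoelder_step_le[of "y - \<theta>"] yt hs h_lt_1 in_ab
    unfolding B_def v_def by auto
  moreover have "z \<theta> - (1 - \<sigma>) *\<^sub>R z x - \<sigma> *\<^sub>R z y = (1 - \<sigma>) *\<^sub>R A - \<sigma> *\<^sub>R B"
  proof -
    have "(1 - \<sigma>) *\<^sub>R A - \<sigma> *\<^sub>R B = z \<theta> - (1 - \<sigma>) *\<^sub>R z x - \<sigma> *\<^sub>R z y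
        - ((1 - \<sigma>) * (\<theta> - x) - \<sigma> * (y - \<theta>)) *\<^sub>R v"
      unfolding A_def B_def by (simp add: algebra_simps)
    also have "(1 - \<sigma>) * (\<theta> - x) - \<sigma> * (y - \<theta>) = 0" unfolding tx yt by (simp add: algebra_simps)
    finally show ?thesis by simp
  qed
  moreover have "norm ((1 - \<sigma>) *\<^sub>R A - \<sigma> *\<^sub>R B) \<le> norm A + norm B"
    using norm_triangle_ineq4[of "(1 - \<sigma>) *\<^sub>R A" "\<sigma> *\<^sub>R B"] \<sigma>
      mult_left_le_one_le[of "norm A" "1 - \<sigma>"] mult_left_le_one_le[of "norm B" \<sigma>] by auto
  ultimately show ?thesis unfolding x_def y_def \<theta>_def by simp
qed

lemma error_decomposition:
  assumes s: "\<And>i. s i \<in> {0..1}"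
  shows "j \<le> n \<Longrightarrow> z (grid j) - rk2_implicit a h s eta f j
     = (\<Sum>k\<in>{1..j}. local_defect k (s k)) + (\<Sum>k\<in>{1..j}. h *\<^sub>R stage_error s k)"
proof (induction j)
  case (Suc j)
  then have j: "j < n" by simp
  have "z (grid (Suc j)) - rk2_implicit a h s eta f (Suc j)
      = (z (grid j) - rk2_implicit a h s eta f j) + local_defect (Suc j) (s (Suc j))
        + h *\<^sub>R stage_error s (Suc j)"
    by (subst (1) rk2_implicit_step[OF j s])
      (simp add: stage_map_def local_defect_def stage_error_def algebra_simps del: rk2_implicit.simps)
  with Suc j show ?case by simp
qed (simp add: z_init)

lemma norm_stage_error_le:
  assumes s: "\<And>i. s i \<in> {0..1}" and k: "1 \<le> k" "k \<le> n"
  shows "norm (stage_error s k) \<le> L * (2 * defect_size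
     + norm (z (grid (k - 1)) - rk2_implicit a h s eta f (k - 1))
     + norm (z (grid k) - rk2_implicit a h s eta f k))"
proof -
  obtain j where kj: "k = Suc j" using k by (cases k) auto
  have j: "j < n" using k kj by simp
  define \<sigma> \<theta> where "\<sigma> = s (Suc j)" and "\<theta> = grid j + h * s (Suc j)"
  define V W where "V = rk2_implicit a h s eta f j" and "W = rk2_implicit a h s eta f (Suc j)"
  define I where "I = z \<theta> - (1 - \<sigma>) *\<^sub>R z (grid j) - \<sigma> *\<^sub>R z (grid (Suc j))"
  have \<sigma>: "\<sigma> \<in> {0..1}" unfolding \<sigma>_def by (rule s)
  have "norm (stage_error s k) \<le> L * norm (z \<theta> - ((1 - \<sigma>) *\<^sub>R V + \<sigma> *\<^sub>R W))"
    unfolding stage_error_def kj \<theta>_def \<sigma>_def V_def W_def using f_lipschitz stage_in[OF j s] by simp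
  also have "z \<theta> - ((1 - \<sigma>) *\<^sub>R V + \<sigma> *\<^sub>R W)
      = I + (1 - \<sigma>) *\<^sub>R (z (grid j) - V) + \<sigma> *\<^sub>R (z (grid (Suc j)) - W)"
    unfolding I_def by (simp add: algebra_simps)
  also have "norm \<dots> \<le> norm I + norm (z (grid j) - V) + norm (z (grid (Suc j)) - W)"
    using norm_triangle_ineq[of "I + (1 - \<sigma>) *\<^sub>R (z (grid j) - V)" "\<sigma> *\<^sub>R (z (grid (Suc j)) - W)"]
      norm_triangle_ineq[of I "(1 - \<sigma>) *\<^sub>R (z (grid j) - V)"] \<sigma>
      mult_left_le_one_le[of "norm (z (grid j) - V)" "1 - \<sigma>"]
      mult_left_le_one_le[of "norm (z (grid (Suc j)) - W)" \<sigma>]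
    by auto
  also have "norm I \<le> 2 * defect_size"
    unfolding I_def \<theta>_def \<sigma>_def by (rule interpolation_error_le[OF j s])
  finally show ?thesis using L unfolding V_def W_def kj by (simp add: mult_left_mono)
qed

definition global_error :: "(nat \<Rightarrow> real) \<Rightarrow> nat \<Rightarrow> real" where
  "global_error s j = norm (z (grid j) - rk2_implicit a h s eta f j)"

definition defect_sum_max :: "(nat \<Rightarrow> real) \<Rightarrow> real" where
  "defect_sum_max s = Max ((\<lambda>i. norm (\<Sum>k\<in>{1..i}. local_defect k (s k))) ` {0..n})"

lemma defect_sum_max_ge: "i \<le> n \<Longrightarrow> norm (\<Sum>k\<in>{1..i}. local_defect k (s k)) \<le> defect_sum_max s"
  unfolding defect_sum_max_def by (rule Max_ge) auto

lemma defect_size_pos: "0 < defect_size"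
  using hoelder_const_pos[of K L a b] K L h_pos by simp

lemma global_error_recursive_le:
  assumes s: "\<And>i. s i \<in> {0..1}" and j: "j \<le> n"
  shows "(1 - L * h) * global_error s j
     \<le> defect_sum_max s + 2 * L * (b - a) * defect_size + 2 * h * L * (\<Sum>k<j. global_error s k)"
proof -
  let ?R = "global_error s"
  let ?S = "\<Sum>k<j. ?R k"
  have R0: "0 \<le> ?R i" for i unfolding global_error_def by simp
  have hL: "0 \<le> h * L" using h_pos L by simp
  have shift: "(\<Sum>k\<in>{1..j}. ?R (k - 1)) = ?S"
    by (simp add: sum.atLeast1_atMost_eq)
  have "(\<Sum>k\<in>{1..j}. ?R k) \<le> (\<Sum>k\<in>{..j}. ?R k)" by (rule sum_mono2) (use R0 in auto)
  then have upto: "(\<Sum>k\<in>{1..j}. ?R k) \<le> ?S + ?R j" by (simp add: lessThan_Suc_atMost[symmetric])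
  have "h * real j \<le> b - a"
    using n_mult_h j h_pos by (metis mult.commute mult_right_mono of_nat_le_iff less_imp_le)
  then have steps: "h * L * (2 * defect_size * real j) \<le> 2 * L * (b - a) * defect_size"
    using mult_right_mono[of "h * real j" "b - a" "2 * L * defect_size"] L defect_size_pos
    by (simp add: algebra_simps)
  have "?R j \<le> norm (\<Sum>k\<in>{1..j}. local_defect k (s k)) + norm (\<Sum>k\<in>{1..j}. h *\<^sub>R stage_error s k)"
    unfolding global_error_def error_decomposition[OF s j] by (rule norm_triangle_ineq)
  also have "norm (\<Sum>k\<in>{1..j}. h *\<^sub>R stage_error s k) \<le> (\<Sum>k\<in>{1..j}. h * norm (stage_error s k))"
    using norm_sum[of "\<lambda>k. h *\<^sub>R stage_error s k"] h_pos by simp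
  also have "\<dots> \<le> (\<Sum>k\<in>{1..j}. h * (L * (2 * defect_size + ?R (k - 1) + ?R k)))"
    using norm_stage_error_le[OF s] j h_pos
    by (intro sum_mono mult_left_mono) (auto simp: global_error_def)
  also have "\<dots> = h * L * (2 * defect_size * real j + (\<Sum>k\<in>{1..j}. ?R (k - 1)) + (\<Sum>k\<in>{1..j}. ?R k))"
    by (simp add: sum.distrib sum_distrib_left algebra_simps)
  also have "\<dots> \<le> h * L * (2 * defect_size * real j + ?S + (?S + ?R j))"
    unfolding shift using upto hL by (intro mult_left_mono) auto
  finally have "?R j \<le> defect_sum_max s + 2 * L * (b - a) * defect_size + 2 * h * L * ?S + h * L * ?R j"
    using defect_sum_max_ge[OF j, of s] steps by (simp add: algebra_simps)
  then show ?thesis by (simp add: algebra_simps)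
qed

lemma global_error_le:
  assumes s: "\<And>i. s i \<in> {0..1}" and \<delta>: "0 < \<delta>" "\<delta> \<le> 1 - L * h" and j: "j \<le> n"
  shows "global_error s j
     \<le> exp (2 * L * (b - a) / \<delta>) / \<delta> * (defect_sum_max s + 2 * L * (b - a) * defect_size)"
proof -
  define A where "A = defect_sum_max s + 2 * L * (b - a) * defect_size"
  have A0: "0 \<le> A"
    using norm_ge_zero[of "\<Sum>k\<in>{1..0}. local_defect k (s k)"] defect_sum_max_ge[of 0 s]
      defect_size_pos L ab unfolding A_def by simp
  have rec: "global_error s i \<le> A / \<delta> + (2 * h * L / \<delta>) * (\<Sum>k<i. global_error s k)" if "i \<le> n" for i
  proof -
    have "\<delta> * global_error s i \<le> (1 - L * h) * global_error s i"
      by (rule mult_right_mono[OF \<delta>(2)]) (simp add: global_error_def)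
    also have "\<dots> \<le> A + 2 * h * L * (\<Sum>k<i. global_error s k)"
      unfolding A_def by (rule global_error_recursive_le[OF s that])
    finally show ?thesis using \<delta>(1) by (simp add: field_simps)
  qed
  have gronwall: "global_error s j \<le> A / \<delta> * (1 + 2 * h * L / \<delta>) ^ j"
    by (rule discrete_gronwall[OF rec _ _ j]) (use A0 \<delta> h_pos L in auto)
  have "(1 + 2 * h * L / \<delta>) ^ j \<le> exp (2 * h * L / \<delta> * real j)"
    by (rule one_plus_power_le_exp) (use h_pos L \<delta> in simp)
  also have "\<dots> \<le> exp (2 * L * (b - a) / \<delta>)"
  proof -
    have "h * real j \<le> b - a"
      using n_mult_h j h_pos by (metis mult.commute mult_right_mono of_nat_le_iff less_imp_le)
    then have "2 * L * (h * real j) / \<delta> \<le> 2 * L * (b - a) / \<delta>"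
      using L \<delta> by (simp add: divide_right_mono)
    then show ?thesis by (simp add: mult_ac)
  qed
  finally have "A / \<delta> * (1 + 2 * h * L / \<delta>) ^ j \<le> A / \<delta> * exp (2 * L * (b - a) / \<delta>)"
    using A0 \<delta> by (intro mult_left_mono) auto
  with gronwall show ?thesis unfolding A_def by (simp add: mult_ac)
qed

end

section \<open>Centred local defects\<close>

text \<open>Clipping the uniform variables into \<open>[0, 1]\<close> changes them only on a null set, but makes every
  stage well defined pointwise: outside \<open>[0, 1]\<close> the fixed point selected by \<open>THE\<close> may not exist.\<close>

definition clip01 :: "real \<Rightarrow> real" where
  "clip01 \<sigma> = max 0 (min 1 \<sigma>)"

lemma clip01_in: "clip01 \<sigma> \<in> {0..1}"
  unfolding clip01_def by auto

lemma clip01_eq: "\<sigma> \<in> {0..1} \<Longrightarrow> clip01 \<sigma> = \<sigma>"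
  unfolding clip01_def by auto

lemma continuous_on_clip01: "continuous_on S clip01"
  unfolding clip01_def by (intro continuous_intros)

lemma borel_measurable_clip01 [measurable]: "clip01 \<in> borel_measurable borel"
  unfolding clip01_def by measurable

lemma integral_uniform_measure_01:
  fixes \<psi> :: "real \<Rightarrow> real"
  assumes "\<psi> \<in> borel_measurable borel" and "continuous_on {0..1} \<psi>"
  shows "integral\<^sup>L (uniform_measure lborel {0..1}) \<psi> = integral {0..1} \<psi>"
proof -
  have "uniform_measure lborel {0..1::real} = density lborel (\<lambda>x. ennreal (indicator {0..1} x))"
    unfolding uniform_measure_def by (simp add: ennreal_indicator divide_ennreal_def)
  then have "integral\<^sup>L (uniform_measure lborel {0..1}) \<psi> = set_lebesgue_integral lborel {0..1} \<psi>"
    unfolding set_lebesgue_integral_def using assms(1) by (simp add: integral_density)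
  also have "\<dots> = integral {0..1} \<psi>"
    by (rule set_borel_integral_eq_integral(2)[OF borel_integrable_atLeastAtMost'[OF assms(2)]])
  finally show ?thesis .
qed

context rk2_grid
begin

lemma continuous_on_local_defect_clip01:
  assumes k: "1 \<le> k" "k \<le> n"
  shows "continuous_on UNIV (\<lambda>\<sigma>. local_defect k (clip01 \<sigma>))"
proof -
  have "continuous_on UNIV (\<lambda>\<sigma>. f (grid (k - 1) + h * clip01 \<sigma>) (z (grid (k - 1) + h * clip01 \<sigma>)))"
    using k clip01_in stage_in[of "k - 1"]
    by (intro continuous_on_f_z_comp continuous_intros continuous_on_clip01) auto
  then show ?thesis unfolding local_defect_def by (intro continuous_intros)
qed

text \<open>By the fundamental theorem of calculus, the stage value \<open>f(\<theta>, z(\<theta>))\<close> at a uniformly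
  distributed stage time is an unbiased estimate of the increment \<open>(z(t_k) - z(t_(k-1))) / h\<close>.\<close>

lemma local_defect_has_integral_0:
  assumes k: "1 \<le> k" "k \<le> n"
  shows "(local_defect k has_integral 0) {0..1}"
proof -
  define x where "x = grid (k - 1)"
  have xk: "x + h = grid k" unfolding x_def using k by (simp add: of_nat_diff algebra_simps)
  have S: "(\<lambda>\<sigma>. x + h * \<sigma>) ` {0..1} \<subseteq> {a..b}"
    unfolding x_def using k stage_in[of "k - 1"] by auto
  have "((\<lambda>\<sigma>. z (x + h * \<sigma>)) has_vector_derivative h *\<^sub>R f (x + h * \<sigma>) (z (x + h * \<sigma>)))
      (at \<sigma> within {0..1})" if "\<sigma> \<in> {0..1}" for \<sigma>
  proof -
    have "((\<lambda>\<sigma>. x + h * \<sigma>) has_vector_derivative h) (at \<sigma> within {0..1})"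
      by (auto intro!: derivative_eq_intros simp: has_real_derivative_iff_has_vector_derivative[symmetric])
    moreover have "(z has_vector_derivative f (x + h * \<sigma>) (z (x + h * \<sigma>)))
        (at (x + h * \<sigma>) within (\<lambda>\<sigma>. x + h * \<sigma>) ` {0..1})"
      by (rule z_has_vector_derivative_within) (use that S in auto)
    ultimately show ?thesis using vector_diff_chain_within by (fastforce simp: o_def)
  qed
  then have "((\<lambda>\<sigma>. h *\<^sub>R f (x + h * \<sigma>) (z (x + h * \<sigma>))) has_integral (z (x + h * 1) - z (x + h * 0))) {0..1}"
    by (intro fundamental_theorem_of_calculus) auto
  moreover have "((\<lambda>\<sigma>. z (grid k) - z x) has_integral (z (grid k) - z x)) {0..1::real}"
    using has_integral_const_real[of "z (grid k) - z x" 0 1] by simp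
  ultimately have "((\<lambda>\<sigma>. (z (grid k) - z x) - h *\<^sub>R f (x + h * \<sigma>) (z (x + h * \<sigma>))) has_integral
      (z (grid k) - z x) - (z (x + h * 1) - z (x + h * 0))) {0..1}"
    by (rule has_integral_diff[rotated])
  then show ?thesis unfolding local_defect_def x_def[symmetric] using xk by simp
qed

lemma integral_uniform_local_defect_inner:
  assumes k: "1 \<le> k" "k \<le> n"
  shows "integral\<^sup>L (uniform_measure lborel {0..1}) (\<lambda>\<sigma>. local_defect k (clip01 \<sigma>) \<bullet> u) = 0"
proof -
  have cont: "continuous_on UNIV (\<lambda>\<sigma>. local_defect k (clip01 \<sigma>) \<bullet> u)"
    by (intro continuous_intros continuous_on_local_defect_clip01[OF k])
  have "integral\<^sup>L (uniform_measure lborel {0..1}) (\<lambda>\<sigma>. local_defect k (clip01 \<sigma>) \<bullet> u)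
      = integral {0..1} (\<lambda>\<sigma>. local_defect k (clip01 \<sigma>) \<bullet> u)"
    by (rule integral_uniform_measure_01[OF borel_measurable_continuous_onI[OF cont]
          continuous_on_subset[OF cont]]) simp
  also have "\<dots> = integral {0..1} (\<lambda>\<sigma>. local_defect k \<sigma> \<bullet> u)"
    by (rule integral_cong) (simp add: clip01_eq)
  also have "\<dots> = 0"
    using has_integral_linear[OF local_defect_has_integral_0[OF k] bounded_linear_inner_left[of u]]
    by (simp add: o_def integral_unique)
  finally show ?thesis .
qed

end

section \<open>Moment bound for the maximal error\<close>

lemma powr_sum_add_le:
  fixes y :: "'b \<Rightarrow> real"
  assumes B: "finite B" and y: "\<And>u. u \<in> B \<Longrightarrow> 0 \<le> y u" and c: "0 \<le> c" and p: "0 < p"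
  shows "((\<Sum>u\<in>B. y u) + c) powr p \<le> (real (card B) + 1) powr p * ((\<Sum>u\<in>B. y u powr p) + c powr p)"
proof -
  define m where "m = Max (insert c (y ` B))"
  have fin: "finite (insert c (y ` B))" using B by simp
  have ym: "y u \<le> m" if "u \<in> B" for u unfolding m_def using fin that by (intro Max_ge) auto
  have cm: "c \<le> m" unfolding m_def using fin by (intro Max_ge) auto
  have "(\<Sum>u\<in>B. y u) \<le> (\<Sum>u\<in>B. m)" by (rule sum_mono) (rule ym)
  then have S: "(\<Sum>u\<in>B. y u) + c \<le> (real (card B) + 1) * m" using cm by (simp add: algebra_simps)
  have "((\<Sum>u\<in>B. y u) + c) powr p \<le> ((real (card B) + 1) * m) powr p"
    using y c p sum_nonneg[of B y] by (intro powr_mono2[OF _ _ S]) auto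
  also have "\<dots> = (real (card B) + 1) powr p * m powr p" using c cm by (simp add: powr_mult)
  also have "m powr p \<le> (\<Sum>u\<in>B. y u powr p) + c powr p"
  proof -
    have "m \<in> insert c (y ` B)" unfolding m_def using fin by (intro Max_in) auto
    then consider "m = c" | u where "u \<in> B" "m = y u" by auto
    then show ?thesis
    proof cases
      case 1
      then show ?thesis by (simp add: sum_nonneg)
    next
      case 2
      have "y u powr p \<le> (\<Sum>u\<in>B. y u powr p)" by (rule member_le_sum) (use 2 B in auto)
      then show ?thesis using 2 by (smt (verit) powr_ge_zero)
    qed
  qed
  finally show ?thesis by (simp add: mult_left_mono)
qed

locale rk2_random = rk2_grid a b rho K L eta f z n h + prob_space M
  for a b rho K L :: real and eta :: "'a::euclidean_space" and f z and n :: nat and h :: real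
    and M :: "'w measure" +
  fixes tau :: "nat \<Rightarrow> 'w \<Rightarrow> real"
  assumes indep_tau: "indep_vars (\<lambda>_. borel) tau UNIV"
    and distr_tau: "\<And>j. distr M borel (tau j) = uniform_measure lborel {0..1}"
begin

lemma borel_measurable_tau [measurable]: "tau i \<in> borel_measurable M"
  using indep_tau unfolding indep_vars_def by blast

definition defect_coord :: "'a \<Rightarrow> nat \<Rightarrow> 'w \<Rightarrow> real" where
  "defect_coord u k \<omega> = (if k \<in> {1..n} then local_defect k (clip01 (tau k \<omega>)) \<bullet> u else 0)"

definition clipped_error_max :: "real \<Rightarrow> 'w \<Rightarrow> real" where
  "clipped_error_max p \<omega> = Max ((\<lambda>j. global_error (\<lambda>i. clip01 (tau i \<omega>)) j powr p) ` {0..n})"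

lemma defect_coord_eq_comp:
  "defect_coord u k = (\<lambda>\<omega>. (\<lambda>\<sigma>. if k \<in> {1..n} then local_defect k (clip01 \<sigma>) \<bullet> u else 0) (tau k \<omega>))"
  unfolding defect_coord_def by (rule ext) simp

lemma borel_measurable_defect_coord_fun:
  "(\<lambda>\<sigma>. if k \<in> {1..n} then local_defect k (clip01 \<sigma>) \<bullet> u else 0) \<in> borel_measurable borel"
proof (cases "k \<in> {1..n}")
  case True
  then have "continuous_on UNIV (\<lambda>\<sigma>. local_defect k (clip01 \<sigma>) \<bullet> u)"
    by (intro continuous_intros continuous_on_local_defect_clip01) auto
  with True show ?thesis by (simp add: borel_measurable_continuous_onI)
next
  case False
  then show ?thesis unfolding if_not_P[OF False] by simp
qed

lemma indep_defect_coord: "indep_vars (\<lambda>_. borel) (defect_coord u) UNIV"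
  unfolding defect_coord_eq_comp
  by (rule indep_vars_compose2[OF indep_tau borel_measurable_defect_coord_fun])

lemma abs_defect_coord_le:
  assumes "u \<in> Basis"
  shows "\<bar>defect_coord u k \<omega>\<bar> \<le> defect_size"
proof (cases "k \<in> {1..n}")
  case True
  have "\<bar>local_defect k (clip01 (tau k \<omega>)) \<bullet> u\<bar> \<le> norm (local_defect k (clip01 (tau k \<omega>)))"
    by (rule Basis_le_norm[OF assms])
  also have "\<dots> \<le> defect_size" using True by (intro norm_local_defect_le clip01_in) auto
  finally show ?thesis unfolding defect_coord_def using True by simp
next
  case False
  then show ?thesis unfolding defect_coord_def if_not_P[OF False] using defect_size_pos by simp
qed

lemma expectation_defect_coord: "expectation (defect_coord u k) = 0"
proof -
  have "expectation (defect_coord u k)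
      = integral\<^sup>L (distr M borel (tau k)) (\<lambda>\<sigma>. if k \<in> {1..n} then local_defect k (clip01 \<sigma>) \<bullet> u else 0)"
    unfolding defect_coord_eq_comp
    by (rule integral_distr[symmetric]) (simp, rule borel_measurable_defect_coord_fun)
  also have "\<dots> = 0"
  proof (cases "k \<in> {1..n}")
    case True
    then show ?thesis
      unfolding distr_tau if_P[OF True] using integral_uniform_local_defect_inner[of k u] by simp
  next
    case False
    then show ?thesis unfolding if_not_P[OF False] by simp
  qed
  finally show ?thesis .
qed

lemma expectation_max_defect_coord_powr_le:
  assumes u: "u \<in> Basis" and p: "2 \<le> p"
  shows "integrable M (\<lambda>\<omega>. max_partial_sum (defect_coord u) n \<omega> powr p)"
    and "expectation (\<lambda>\<omega>. max_partial_sum (defect_coord u) n \<omega> powr p)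
           \<le> max_moment_const p * (real n * defect_size\<^sup>2) powr (p/2)"
proof -
  have meas: "defect_coord u k \<in> borel_measurable M" for k
    using indep_defect_coord unfolding indep_vars_def by blast
  show "integrable M (\<lambda>\<omega>. max_partial_sum (defect_coord u) n \<omega> powr p)"
    by (rule integrable_max_partial_sum_powr[OF meas abs_defect_coord_le[OF u]]) (use p in simp)
  show "expectation (\<lambda>\<omega>. max_partial_sum (defect_coord u) n \<omega> powr p)
           \<le> max_moment_const p * (real n * defect_size\<^sup>2) powr (p/2)"
    by (rule expectation_max_partial_sum_powr_le[OF indep_defect_coord abs_defect_coord_le[OF u]
          expectation_defect_coord defect_size_pos p n_pos])
qed

lemma defect_sum_max_le:
  "defect_sum_max (\<lambda>i. clip01 (tau i \<omega>)) \<le> (\<Sum>u\<in>Basis. max_partial_sum (defect_coord u) n \<omega>)"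
  unfolding defect_sum_max_def
proof (subst Max_le_iff, simp, simp, safe)
  fix i assume i: "i \<in> {0..n}"
  have "norm (\<Sum>k\<in>{1..i}. local_defect k (clip01 (tau k \<omega>)))
      \<le> (\<Sum>u\<in>Basis. \<bar>(\<Sum>k\<in>{1..i}. local_defect k (clip01 (tau k \<omega>))) \<bullet> u\<bar>)"
    by (rule norm_le_l1)
  also have "\<dots> = (\<Sum>u\<in>Basis. \<bar>\<Sum>k\<in>{1..i}. defect_coord u k \<omega>\<bar>)"
    using i by (intro sum.cong refl) (auto simp: inner_sum_left defect_coord_def intro!: arg_cong[where f=abs] sum.cong)
  also have "\<dots> \<le> (\<Sum>u\<in>Basis. max_partial_sum (defect_coord u) n \<omega>)"
    using i by (intro sum_mono max_partial_sum_ge) auto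
  finally show "norm (\<Sum>k\<in>{1..i}. local_defect k (clip01 (tau k \<omega>)))
      \<le> (\<Sum>u\<in>Basis. max_partial_sum (defect_coord u) n \<omega>)" .
qed

lemma clipped_error_max_le:
  assumes p: "0 < p" and \<delta>: "0 < \<delta>" "\<delta> \<le> 1 - L * h"
  defines "\<Gamma> \<equiv> exp (2 * L * (b - a) / \<delta>) / \<delta> * (real DIM('a) + 1)"
  shows "clipped_error_max p \<omega>
     \<le> \<Gamma> powr p * ((\<Sum>u\<in>Basis. max_partial_sum (defect_coord u) n \<omega> powr p)
                     + (2 * L * (b - a) * defect_size) powr p)"
proof -
  define Y where "Y = (\<Sum>u\<in>(Basis::'a set). max_partial_sum (defect_coord u) n \<omega>)"
  define c where "c = 2 * L * (b - a) * defect_size"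
  have c: "0 \<le> c" unfolding c_def using L ab defect_size_pos by simp
  have Y: "0 \<le> Y" unfolding Y_def by (simp add: sum_nonneg max_partial_sum_nonneg)
  have "global_error (\<lambda>i. clip01 (tau i \<omega>)) j powr p
      \<le> (exp (2 * L * (b - a) / \<delta>) / \<delta> * (Y + c)) powr p" if "j \<le> n" for j
  proof (rule powr_mono2)
    have "global_error (\<lambda>i. clip01 (tau i \<omega>)) j
        \<le> exp (2 * L * (b - a) / \<delta>) / \<delta> * (defect_sum_max (\<lambda>i. clip01 (tau i \<omega>)) + c)"
      unfolding c_def by (rule global_error_le[OF clip01_in \<delta> that])
    also have "\<dots> \<le> exp (2 * L * (b - a) / \<delta>) / \<delta> * (Y + c)"
      using defect_sum_max_le[of \<omega>] \<delta> unfolding Y_def by (intro mult_left_mono) auto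
    finally show "global_error (\<lambda>i. clip01 (tau i \<omega>)) j \<le> exp (2 * L * (b - a) / \<delta>) / \<delta> * (Y + c)" .
  qed (use p in \<open>auto simp: global_error_def\<close>)
  then have "clipped_error_max p \<omega> \<le> (exp (2 * L * (b - a) / \<delta>) / \<delta> * (Y + c)) powr p"
    unfolding clipped_error_max_def by (subst Max_le_iff) auto
  also have "\<dots> = (exp (2 * L * (b - a) / \<delta>) / \<delta>) powr p * (Y + c) powr p"
    by (rule powr_mult)
  also have "\<dots> \<le> (exp (2 * L * (b - a) / \<delta>) / \<delta>) powr p * ((real DIM('a) + 1) powr p
      * ((\<Sum>u\<in>Basis. max_partial_sum (defect_coord u) n \<omega> powr p) + c powr p))"
    unfolding Y_def
    by (intro mult_left_mono powr_sum_add_le[OF finite_Basis _ c p]) (simp_all add: max_partial_sum_nonneg)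
  also have "\<dots> = \<Gamma> powr p * ((\<Sum>u\<in>Basis. max_partial_sum (defect_coord u) n \<omega> powr p) + c powr p)"
    unfolding \<Gamma>_def powr_mult by (simp only: mult.assoc)
  finally show ?thesis unfolding c_def .
qed

lemma borel_measurable_clipped_error_max: "clipped_error_max p \<in> borel_measurable M"
  unfolding clipped_error_max_def global_error_def
proof (rule borel_measurable_Max)
  fix j assume "j \<in> {0..n}"
  then have "(\<lambda>\<omega>. rk2_implicit a h (\<lambda>i. clip01 (tau i \<omega>)) eta f j) \<in> borel_measurable M"
    by (intro borel_measurable_rk2_implicit clip01_in) auto
  then show "(\<lambda>\<omega>. norm (z (grid j) - rk2_implicit a h (\<lambda>i. clip01 (tau i \<omega>)) eta f j) powr p)
      \<in> borel_measurable M" by measurable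
qed simp

end

definition rk2_const :: "real \<Rightarrow> real \<Rightarrow> real \<Rightarrow> real \<Rightarrow> real \<Rightarrow> real \<Rightarrow> real \<Rightarrow> real" where
  "rk2_const a b K L \<delta> p d =
     (exp (2 * L * (b - a) / \<delta>) / \<delta> * (d + 1)) powr p
     * (d * max_moment_const p * ((b - a) * (hoelder_const a b K L)\<^sup>2) powr (p/2)
        + (2 * L * (b - a) * hoelder_const a b K L) powr p)"

lemma rk2_const_pos:
  assumes "a < b" "0 < K" "0 < L" "0 < \<delta>" "0 \<le> d"
  shows "0 < rk2_const a b K L \<delta> p d"
  unfolding rk2_const_def using assms hoelder_const_pos[of K L a b] max_moment_const_pos[of p]
  by (intro mult_pos_pos add_nonneg_pos) auto

context rk2_grid
begin

lemma moment_bound_le_rk2_const: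
  assumes p: "0 < p" and \<delta>: "0 < \<delta>"
  shows "(exp (2 * L * (b - a) / \<delta>) / \<delta> * (real DIM('a) + 1)) powr p
      * (real DIM('a) * max_moment_const p * (real n * defect_size\<^sup>2) powr (p/2)
         + (2 * L * (b - a) * defect_size) powr p)
    \<le> rk2_const a b K L \<delta> p DIM('a) * h powr (p * (rho + 1/2))"
proof -
  define H where "H = hoelder_const a b K L"
  have n_defect: "real n * defect_size\<^sup>2 = (b - a) * H\<^sup>2 * h powr (2 * rho + 1)"
  proof -
    have "(h powr rho)\<^sup>2 = h powr (2 * rho)"
      using h_pos by (simp add: power2_eq_square powr_add[symmetric])
    then have "real n * defect_size\<^sup>2 = (real n * h) * H\<^sup>2 * (h powr (2 * rho) * h)"
      unfolding H_def by (simp add: power2_eq_square algebra_simps)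
    also have "h powr (2 * rho) * h = h powr (2 * rho + 1)" using h_pos by (simp add: powr_add)
    finally show ?thesis using n_mult_h by simp
  qed
  have sq: "(real n * defect_size\<^sup>2) powr (p/2) = ((b - a) * H\<^sup>2) powr (p/2) * h powr (p * (rho + 1/2))"
  proof -
    have "(real n * defect_size\<^sup>2) powr (p/2) = ((b - a) * H\<^sup>2) powr (p/2) * (h powr (2 * rho + 1)) powr (p/2)"
      unfolding n_defect by (rule powr_mult)
    also have "(h powr (2 * rho + 1)) powr (p/2) = h powr (p * (rho + 1/2))"
      by (simp add: powr_powr algebra_simps)
    finally show ?thesis .
  qed
  have "2 * L * (b - a) * defect_size = 2 * L * (b - a) * H * h powr (rho + 1)"
    using h_pos unfolding H_def by (simp add: powr_add)
  then have "(2 * L * (b - a) * defect_size) powr p = (2 * L * (b - a) * H) powr p * (h powr (rho + 1)) powr p"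
    by (simp only: powr_mult)
  also have "(h powr (rho + 1)) powr p = h powr (p * (rho + 1))"
    by (simp add: powr_powr mult.commute)
  finally have "(2 * L * (b - a) * defect_size) powr p = (2 * L * (b - a) * H) powr p * h powr (p * (rho + 1))" .
  also have "\<dots> \<le> (2 * L * (b - a) * H) powr p * h powr (p * (rho + 1/2))"
    using h_pos h_lt_1 p rho by (intro mult_left_mono powr_mono') auto
  finally have lin: "(2 * L * (b - a) * defect_size) powr p \<le> (2 * L * (b - a) * H) powr p * h powr (p * (rho + 1/2))" .
  define \<Gamma> where "\<Gamma> = (exp (2 * L * (b - a) / \<delta>) / \<delta> * (real DIM('a) + 1)) powr p"
  have "\<Gamma> * (real DIM('a) * max_moment_const p * (real n * defect_size\<^sup>2) powr (p/2)
         + (2 * L * (b - a) * defect_size) powr p)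
      \<le> \<Gamma> * (real DIM('a) * max_moment_const p * (((b - a) * H\<^sup>2) powr (p/2) * h powr (p * (rho + 1/2)))
         + (2 * L * (b - a) * H) powr p * h powr (p * (rho + 1/2)))"
    unfolding sq \<Gamma>_def by (intro mult_left_mono add_left_mono lin) simp
  also have "\<dots> = rk2_const a b K L \<delta> p DIM('a) * h powr (p * (rho + 1/2))"
    unfolding rk2_const_def \<Gamma>_def H_def by (simp add: algebra_simps)
  finally show ?thesis unfolding \<Gamma>_def .
qed

end

context rk2_random
begin

lemma clipped_error_max_nonneg: "0 \<le> clipped_error_max p \<omega>"
proof -
  have "global_error (\<lambda>i. clip01 (tau i \<omega>)) 0 powr p \<le> clipped_error_max p \<omega>"
    unfolding clipped_error_max_def by (rule Max_ge) auto
  then show ?thesis using powr_ge_zero order_trans by blast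
qed

lemma expectation_clipped_error_max_le:
  assumes p: "2 \<le> p" and \<delta>: "0 < \<delta>" "\<delta> \<le> 1 - L * h"
  shows "integrable M (clipped_error_max p)"
    and "expectation (clipped_error_max p) \<le> rk2_const a b K L \<delta> p DIM('a) * h powr (p * (rho + 1/2))"
proof -
  define \<Gamma> where "\<Gamma> = exp (2 * L * (b - a) / \<delta>) / \<delta> * (real DIM('a) + 1)"
  define c where "c = (2 * L * (b - a) * defect_size) powr p"
  define G where "G \<omega> = \<Gamma> powr p * ((\<Sum>u\<in>Basis. max_partial_sum (defect_coord u) n \<omega> powr p) + c)" for \<omega>
  note int_coord = expectation_max_defect_coord_powr_le(1)[OF _ p]
  have int_G: "integrable M G"
    unfolding G_def using int_coord by (intro integrable_mult_right Bochner_Integration.integrable_add) auto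
  have le_G: "clipped_error_max p \<omega> \<le> G \<omega>" for \<omega>
    unfolding G_def \<Gamma>_def c_def using p \<delta> by (intro clipped_error_max_le) auto
  show int: "integrable M (clipped_error_max p)"
  proof (rule Bochner_Integration.integrable_bound[OF int_G borel_measurable_clipped_error_max])
    show "AE \<omega> in M. norm (clipped_error_max p \<omega>) \<le> norm (G \<omega>)"
    proof (rule AE_I2)
      fix \<omega>
      show "norm (clipped_error_max p \<omega>) \<le> norm (G \<omega>)"
        using le_G[of \<omega>] clipped_error_max_nonneg[of p \<omega>] abs_ge_self[of "G \<omega>"] by simp
    qed
  qed
  have "expectation (clipped_error_max p) \<le> expectation G"
    by (rule integral_mono[OF int int_G le_G])
  also have "\<dots> = \<Gamma> powr p * ((\<Sum>u\<in>Basis. expectation (\<lambda>\<omega>. max_partial_sum (defect_coord u) n \<omega> powr p)) + c)"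
    unfolding G_def using int_coord by (simp add: integral_sum prob_space)
  also have "\<dots> \<le> \<Gamma> powr p * ((\<Sum>u\<in>(Basis::'a set). max_moment_const p * (real n * defect_size\<^sup>2) powr (p/2)) + c)"
    using expectation_max_defect_coord_powr_le(2)[OF _ p] by (intro mult_left_mono add_right_mono sum_mono) auto
  also have "\<dots> \<le> rk2_const a b K L \<delta> p DIM('a) * h powr (p * (rho + 1/2))"
    using moment_bound_le_rk2_const[OF _ \<delta>(1), of p] p unfolding \<Gamma>_def c_def by (simp add: mult_ac)
  finally show "expectation (clipped_error_max p) \<le> rk2_const a b K L \<delta> p DIM('a) * h powr (p * (rho + 1/2))" .
qed

end

lemma (in complete_measure) borel_measurable_AE_cong:
  assumes g: "g \<in> borel_measurable M" and ae: "AE x in M. f x = g x"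
  shows "f \<in> borel_measurable M"
proof (rule measurableI)
  fix A :: "'b set" assume A: "A \<in> sets borel"
  have "AE x in M. x \<in> g -` A \<inter> space M \<longleftrightarrow> x \<in> f -` A \<inter> space M"
    using ae by (rule eventually_mono) auto
  from in_sets_AE[OF this measurable_sets[OF g A]]
  show "f -` A \<inter> space M \<in> sets M" by auto
qed simp

lemma powr_inverse_le_of_le:
  fixes E C h p r :: real
  assumes "0 \<le> E" "E \<le> C * h powr (p * r)" "0 < p"
  shows "E powr (1 / p) \<le> C powr (1 / p) * h powr r"
proof -
  have "E powr (1 / p) \<le> (C * h powr (p * r)) powr (1 / p)"
    using assms by (intro powr_mono2) auto
  also have "\<dots> = C powr (1 / p) * h powr r"
    using assms(3) by (simp add: powr_mult powr_powr)
  finally show ?thesis .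
qed

context rk2_random
begin

lemma AE_tau_in_01: "AE \<omega> in M. \<forall>i. tau i \<omega> \<in> {0..1}"
proof (subst AE_all_countable, intro allI)
  fix i
  have "AE y in distr M borel (tau i). y \<in> {0..1}"
    unfolding distr_tau by (rule AE_uniform_measureI) (auto intro: AE_I2)
  then show "AE \<omega> in M. tau i \<omega> \<in> {0..1}"
    by (subst AE_distr_iff[symmetric]) simp_all
qed

lemma error_max_moment:
  assumes complete: "complete_measure M" and p: "2 \<le> p" and \<delta>: "0 < \<delta>" "\<delta> \<le> 1 - L * h"
  defines "X \<equiv> \<lambda>\<omega>. Max ((\<lambda>j. global_error (\<lambda>i. tau i \<omega>) j powr p) ` {0..n})"
  shows "integrable M X"
    and "expectation X powr (1 / p) \<le> rk2_const a b K L \<delta> p DIM('a) powr (1 / p) * h powr (rho + 1/2)"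
proof -
  have AE_eq: "AE \<omega> in M. X \<omega> = clipped_error_max p \<omega>"
    using AE_tau_in_01 by (rule eventually_mono) (simp add: X_def clipped_error_max_def clip01_eq)
  have X_meas: "X \<in> borel_measurable M"
    by (rule complete_measure.borel_measurable_AE_cong[OF complete borel_measurable_clipped_error_max AE_eq])
  note clipped = expectation_clipped_error_max_le[OF p \<delta>]
  show "integrable M X"
    using integrable_cong_AE[OF X_meas borel_measurable_clipped_error_max AE_eq] clipped(1) by simp
  have E: "expectation X = expectation (clipped_error_max p)"
    by (rule integral_cong_AE[OF X_meas borel_measurable_clipped_error_max AE_eq])
  have "0 \<le> expectation (clipped_error_max p)"
    by (rule integral_nonneg_AE) (simp add: clipped_error_max_nonneg)
  from powr_inverse_le_of_le[OF this clipped(2)] p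
  show "expectation X powr (1 / p) \<le> rk2_const a b K L \<delta> p DIM('a) powr (1 / p) * h powr (rho + 1/2)"
    unfolding E by simp
qed

end

text \<open>The contraction factor \<open>L h\<close> of the implicit stage stays uniformly below 1 over all
  admissible \<open>n\<close>, since these are integers exceeding \<open>L (b - a)\<close>.\<close>

lemma uniform_contraction_margin:
  fixes c :: real
  assumes "0 < c"
  shows "\<exists>\<delta>>0. \<forall>n::nat. c < real n \<longrightarrow> \<delta> \<le> 1 - c / real n"
proof (intro exI conjI allI impI)
  have fl: "c < of_int \<lfloor>c\<rfloor> + 1" "0 < of_int \<lfloor>c\<rfloor> + (1::real)" using assms by linarith+
  then show "0 < 1 - c / (of_int \<lfloor>c\<rfloor> + 1)" by (simp add: field_simps)
  fix n :: nat assume "c < real n"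
  then have "\<lfloor>c\<rfloor> < int n" by (simp add: floor_less_iff)
  then have "of_int \<lfloor>c\<rfloor> + 1 \<le> real n" by linarith
  then show "1 - c / (of_int \<lfloor>c\<rfloor> + 1) \<le> 1 - c / real n"
    using assms fl by (simp add: divide_left_mono)
qed

theorem theorem2:
  fixes a b rho K L p :: real
    and M :: "'w measure"
    and tau :: "nat \<Rightarrow> 'w \<Rightarrow> real"
  assumes "a < b" and "0 < rho" and "rho \<le> 1" and "0 < K" and "0 < L" and "2 \<le> p"
    and "prob_space M" and "complete_measure M"
    and "prob_space.indep_vars M (\<lambda>_. borel) tau UNIV"
    and "\<And>j. distr M borel (tau j) = uniform_measure lborel {0..1}"
  shows "\<exists>C>0. \<forall>(n::nat) (eta::'a::euclidean_space) (f :: real \<Rightarrow> 'a \<Rightarrow> 'a) (z :: real \<Rightarrow> 'a).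
           real n \<ge> real_of_int \<lfloor>b - a\<rfloor> + 1 \<longrightarrow>
           L * ((b - a) / real n) < 1 \<longrightarrow>
           F_class a b rho K L eta f \<longrightarrow>
           z a = eta \<longrightarrow>
           (\<forall>t\<in>{a..b}. (z has_vector_derivative f t (z t)) (at t within {a..b})) \<longrightarrow>
           (let h = (b - a) / real n;
                X = (\<lambda>\<omega>. Max ((\<lambda>j. norm (z (a + real j * h)
                        - rk2_implicit a h (\<lambda>i. tau i \<omega>) eta f j) powr p) ` {0..n}))
            in integrable M X \<and>
               (prob_space.expectation M X) powr (1 / p) \<le> C * h powr (rho + 1 / 2))"
proof -
  obtain \<delta> where \<delta>: "0 < \<delta>" "\<And>n::nat. L * (b - a) < real n \<Longrightarrow> \<delta> \<le> 1 - L * (b - a) / real n"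
    using uniform_contraction_margin[of "L * (b - a)"] assms(1,5) by auto
  show ?thesis
  proof (intro exI[of _ "rk2_const a b K L \<delta> p DIM('a) powr (1 / p)"] conjI allI impI)
    show "0 < rk2_const a b K L \<delta> p DIM('a) powr (1 / p)"
      using rk2_const_pos[OF assms(1,4,5) \<delta>(1), where d="real DIM('a)" and p=p] by simp
    fix n :: nat and eta :: 'a and f z
    assume n: "real_of_int \<lfloor>b - a\<rfloor> + 1 \<le> real n" and Lh: "L * ((b - a) / real n) < 1"
      and "F_class a b rho K L eta f" "z a = eta"
      and "\<forall>t\<in>{a..b}. (z has_vector_derivative f t (z t)) (at t within {a..b})"
    moreover have "b - a < real n" using n by linarith
    moreover have "0 \<le> \<lfloor>b - a\<rfloor>" using assms(1) by simp
    then have "1 \<le> n" using n by linarith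
    ultimately interpret rk2_random a b rho K L eta f z n "(b - a) / real n" M tau
      using assms by (intro rk2_random.intro rk2_grid.intro ivp.intro rk2_grid_axioms.intro
          rk2_random_axioms.intro) simp_all
    have "\<delta> \<le> 1 - L * ((b - a) / real n)" using \<delta>(2)[of n] Lh n_pos by (simp add: field_simps)
    note moment = error_max_moment[OF assms(8,6) \<delta>(1) this]
    show "let h = (b - a) / real n;
            X = (\<lambda>\<omega>. Max ((\<lambda>j. norm (z (a + real j * h) - rk2_implicit a h (\<lambda>i. tau i \<omega>) eta f j) powr p) ` {0..n}))
          in integrable M X \<and> expectation X powr (1 / p) \<le> rk2_const a b K L \<delta> p DIM('a) powr (1 / p) * h powr (rho + 1 / 2)"
      using moment unfolding Let_def global_error_def by simp
  qed
qed

end
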